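(* Suppose all $x_i$, $r_i$ and $L$ are integers. Then there is an algorithm that computes a minimum-cost feasible order-preserving solution in $O(\textsc{opt}^2\, n)$ time, where $\textsc{opt}$ is the minimum cost of a feasible order-preserving solution.
   Context: Barrier coverage problem: an instance consists of $L>0$ and $n$ sensors with locations $x_i$ and radii $r_i$, indexed so that $x_1\le\cdots\le x_n$. A solution $y\in\mathbb{R}^n$ places sensor $i$ to cover $[y_i-r_i,y_i+r_i]$; it is feasible if these intervals cover $[0,L]$; its cost is $\sum_i|y_i-x_i|$. A set $S$ is active for $y$ if $\bigcup_{i\in S}[y_i-r_i,y_i+r_i]\supseteq[0,L]$. A solution $y$ is order-preserving if it has an active set $S$ such that for all $i,j\in S$ with $i<j$ we have $y_i<y_j$. *)

theory Defs
  imports Complex_Main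
begin

text \<open>Sensors are indexed 0..n-1 (the paper uses 1..n). A solution is a
function y :: nat => real; only the values at indices i < n matter.\<close>

definition active :: "real \<Rightarrow> (nat \<Rightarrow> real) \<Rightarrow> (nat \<Rightarrow> real) \<Rightarrow> nat set \<Rightarrow> bool" where
  "active L r y S \<longleftrightarrow> {0..L} \<subseteq> (\<Union>i\<in>S. {y i - r i .. y i + r i})"

definition feasible :: "nat \<Rightarrow> real \<Rightarrow> (nat \<Rightarrow> real) \<Rightarrow> (nat \<Rightarrow> real) \<Rightarrow> bool" where
  "feasible n L r y \<longleftrightarrow> active L r y {..<n}"

definition order_preserving :: "nat \<Rightarrow> real \<Rightarrow> (nat \<Rightarrow> real) \<Rightarrow> (nat \<Rightarrow> real) \<Rightarrow> bool" where
  "order_preserving n L r y \<longleftrightarrow>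
     (\<exists>S \<subseteq> {..<n}. active L r y S \<and> (\<forall>i\<in>S. \<forall>j\<in>S. i < j \<longrightarrow> y i < y j))"

definition cost :: "nat \<Rightarrow> (nat \<Rightarrow> real) \<Rightarrow> (nat \<Rightarrow> real) \<Rightarrow> real" where
  "cost n x y = (\<Sum>i<n. \<bar>y i - x i\<bar>)"

definition opt_op :: "nat \<Rightarrow> real \<Rightarrow> (nat \<Rightarrow> real) \<Rightarrow> (nat \<Rightarrow> real) \<Rightarrow> real" where
  "opt_op n L x r = Inf {cost n x y | y. feasible n L r y \<and> order_preserving n L r y}"

text \<open>Each executed
instruction costs one time unit. Arithmetic: addition and subtraction only
(no unit-cost multiplication), indirect addressing, conditional jumps.\<close>

datatype instr =
    Const int int
  | Add int int int
  | Sub int int int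
  | Load int int
  | Store int int
  | Jz int nat
  | Jneg int nat
  | Jmp nat
  | Halt

type_synonym mem = "int \<Rightarrow> int"
type_synonym config = "nat \<times> mem"

fun exec_instr :: "instr \<Rightarrow> config \<Rightarrow> config" where
  "exec_instr (Const a c) (pc, M) = (Suc pc, M(a := c))"
| "exec_instr (Add a b c) (pc, M) = (Suc pc, M(a := M b + M c))"
| "exec_instr (Sub a b c) (pc, M) = (Suc pc, M(a := M b - M c))"
| "exec_instr (Load a b) (pc, M) = (Suc pc, M(a := M (M b)))"
| "exec_instr (Store a b) (pc, M) = (Suc pc, M(M a := M b))"
| "exec_instr (Jz a l) (pc, M) = (if M a = 0 then l else Suc pc, M)"
| "exec_instr (Jneg a l) (pc, M) = (if M a < 0 then l else Suc pc, M)"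
| "exec_instr (Jmp l) (pc, M) = (l, M)"
| "exec_instr Halt (pc, M) = (pc, M)"

definition halted :: "instr list \<Rightarrow> config \<Rightarrow> bool" where
  "halted P c \<longleftrightarrow> fst c \<ge> length P \<or> P ! fst c = Halt"

definition step :: "instr list \<Rightarrow> config \<Rightarrow> config" where
  "step P c = (if halted P c then c else exec_instr (P ! fst c) c)"

definition halts_in :: "instr list \<Rightarrow> config \<Rightarrow> nat \<Rightarrow> config \<Rightarrow> bool" where
  "halts_in P c t c' \<longleftrightarrow> c' = (step P ^^ t) c \<and> halted P c'"

definition input_mem :: "nat \<Rightarrow> int \<Rightarrow> (nat \<Rightarrow> int) \<Rightarrow> (nat \<Rightarrow> int) \<Rightarrow> mem" where
  "input_mem n L x r = (\<lambda>a.
      if a = 0 then int n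
      else if a = 1 then L
      else if 2 \<le> a \<and> a < 2 + int n then x (nat (a - 2))
      else if 2 + int n \<le> a \<and> a < 2 + 2 * int n then r (nat (a - 2 - int n))
      else 0)"

definition output_sol :: "nat \<Rightarrow> mem \<Rightarrow> (nat \<Rightarrow> real)" where
  "output_sol n M = (\<lambda>i. real_of_int (M (2 + 2 * int n + int i)))"

end

theory Submission
  imports Defs "HOL-Analysis.Analysis"
begin

text \<open>Scan the sensors in index order, each one extending the covered prefix \<open>[0, R]\<close> of the
  line when its interval meets it: a solution is order-preserving exactly when this reach is at
  least \<open>L\<close>. Rounding all \<open>y\<^sub>i - t\<close> up for a suitable common shift \<open>t \<in> [0, 1)\<close> keeps the reach
  and does not increase the cost, because averaged over \<open>t\<close> the rounded cost equals the original
  one; hence the optimum is attained by an integral solution. For integral solutions the largest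
  reach \<open>T i c\<close> of the first \<open>i\<close> sensors with total displacement at most \<open>c\<close> satisfies
  \<open>T (i + 1) c = max {extend (T i (c - k)) k | k \<le> c}\<close>. The program computes the columns
  \<open>c = 0, 1, \<dots>\<close> of \<open>T\<close>, each in \<open>O(n c)\<close> steps, stops at the first column with \<open>T n c \<ge> L\<close>,
  which is \<open>c = opt\<close>, and traces the maximising displacements back to an optimal solution.\<close>

section \<open>The reach of a placement\<close>

definition reach_step :: "'a::linordered_idom \<Rightarrow> 'a \<Rightarrow> 'a \<Rightarrow> 'a" where
  "reach_step R y r = (if y - r \<le> R then max R (y + r) else R)"

fun reach_on :: "(nat \<Rightarrow> real) \<Rightarrow> (nat \<Rightarrow> real) \<Rightarrow> nat set \<Rightarrow> nat \<Rightarrow> real" where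
  "reach_on y r S 0 = 0"
| "reach_on y r S (Suc i) =
     (if i \<in> S then reach_step (reach_on y r S i) (y i) (r i) else reach_on y r S i)"

abbreviation reach :: "(nat \<Rightarrow> real) \<Rightarrow> (nat \<Rightarrow> real) \<Rightarrow> nat \<Rightarrow> real" where
  "reach y r \<equiv> reach_on y r UNIV"

lemma reach_step_ge: "R \<le> reach_step R y r"
  by (simp add: reach_step_def)

lemma reach_step_mono: "R \<le> R' \<Longrightarrow> reach_step R y r \<le> reach_step R' y r"
  by (auto simp: reach_step_def)

lemma of_int_reach_step:
  "(of_int (reach_step R y r) :: 'a::linordered_idom) = reach_step (of_int R) (of_int y) (of_int r)"
proof -
  have "(of_int y - of_int r \<le> (of_int R :: 'a)) \<longleftrightarrow> y - r \<le> R"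
    by (metis of_int_diff of_int_le_iff)
  then show ?thesis by (simp add: reach_step_def of_int_max)
qed

lemma reach_on_nonneg: "0 \<le> reach_on y r S i"
  by (induction i) (auto intro: order_trans[OF _ reach_step_ge])

lemma reach_on_mono: "i \<le> j \<Longrightarrow> reach_on y r S i \<le> reach_on y r S j"
  by (induction j) (auto simp: le_Suc_eq intro: order_trans[OF _ reach_step_ge])

lemma reach_on_le_reach: "reach_on y r S i \<le> reach y r i"
  by (induction i) (auto intro: reach_step_mono order_trans[OF _ reach_step_ge])

lemma reach_cong: "(\<And>j. j < i \<Longrightarrow> y j = y' j) \<Longrightarrow> reach y r i = reach y' r i"
  by (induction i) auto

lemma reach_on_crossing:
  assumes "reach_on y r S j \<le> q" "j \<le> m" "q < reach_on y r S m"
  shows "\<exists>k. j \<le> k \<and> k < m \<and> reach_on y r S k \<le> q \<and> q < reach_on y r S (Suc k)"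
  using assms
proof (induction m)
  case (Suc m)
  show ?case
  proof (cases "q < reach_on y r S m")
    case True
    then have "j \<le> m" using Suc.prems by (cases "j = Suc m") auto
    then show ?thesis using Suc.IH Suc.prems True by (meson less_Suc_eq)
  next
    case False
    then show ?thesis using Suc.prems by (intro exI[of _ m]) (auto simp: le_Suc_eq)
  qed
qed simp

definition extends_reach :: "(nat \<Rightarrow> real) \<Rightarrow> (nat \<Rightarrow> real) \<Rightarrow> nat \<Rightarrow> bool" where
  "extends_reach y r i \<longleftrightarrow> y i - r i \<le> reach y r i \<and> reach y r i < y i + r i"

lemma extends_reach_Suc: "extends_reach y r i \<Longrightarrow> reach y r (Suc i) = y i + r i"
  by (auto simp: extends_reach_def reach_step_def)

lemma exists_extending_cover:
  assumes z: "0 \<le> z" "z \<le> reach y r n" and pos: "0 < reach y r n"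
  shows "\<exists>i<n. extends_reach y r i \<and> y i - r i \<le> z \<and> z \<le> y i + r i"
proof -
  let ?P = "\<lambda>i. z \<le> reach y r (Suc i) \<and> 0 < reach y r (Suc i)"
  have n0: "n \<noteq> 0" using pos by (cases n) auto
  then have "?P (n - 1)" using z pos by auto
  define i0 where "i0 = (LEAST i. ?P i)"
  have P0: "?P i0" unfolding i0_def by (rule LeastI) fact
  have least: "\<And>j. ?P j \<Longrightarrow> i0 \<le> j" unfolding i0_def by (rule Least_le)
  have i0n: "i0 < n" using least[OF \<open>?P (n - 1)\<close>] n0 by simp
  have before: "reach y r i0 \<le> z \<and> (reach y r i0 < z \<or> reach y r i0 = 0)"
  proof (cases i0)
    case (Suc j)
    then have "\<not> ?P j" using least by fastforce
    then show ?thesis using Suc reach_on_nonneg[of y r UNIV i0] z by auto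
  qed (use z in simp)
  then have "reach y r i0 < reach y r (Suc i0)" using P0 by auto
  then have "extends_reach y r i0"
    by (auto simp: extends_reach_def reach_step_def split: if_splits)
  then show ?thesis using i0n before P0 extends_reach_Suc
    by (intro exI[of _ i0]) (auto simp: extends_reach_def)
qed

text \<open>The active set consists of the extending sensors whose left ends increase strictly
  towards the end of the scan.\<close>

lemma reach_ge_order_preserving:
  assumes L: "L > 0" and R: "reach y r n \<ge> L"
  shows "order_preserving n L r y"
proof -
  define l where "l i = y i - r i" for i
  define S where "S = {i. i < n \<and> extends_reach y r i \<and>
    (\<forall>k. i < k \<and> k < n \<and> extends_reach y r k \<longrightarrow> l i < l k)}"
  have incr: "y i < y j" if "i \<in> S" "j \<in> S" "i < j" for i j
  proof -
    have "l i < l j" using that unfolding S_def by auto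
    moreover have "y i + r i = reach y r (Suc i)" using that extends_reach_Suc unfolding S_def
      by auto
    moreover have "\<dots> \<le> reach y r j" by (rule reach_on_mono) (use that(3) in simp)
    moreover have "\<dots> < y j + r j" using that unfolding S_def extends_reach_def by auto
    ultimately show ?thesis unfolding l_def by simp
  qed
  have "active L r y S" unfolding active_def
  proof
    fix z assume "z \<in> {0..L}"
    define C where "C = {i. i < n \<and> extends_reach y r i \<and> y i - r i \<le> z \<and> z \<le> y i + r i}"
    have "C \<noteq> {}" "finite C"
      using exists_extending_cover[of z y r n] \<open>z \<in> {0..L}\<close> L R unfolding C_def by auto
    then have i1C: "Max C \<in> C" and i1max: "\<And>k. k \<in> C \<Longrightarrow> k \<le> Max C" by simp_all
    have "Max C \<in> S" unfolding S_def
    proof (intro CollectI conjI allI impI)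
      show "Max C < n" "extends_reach y r (Max C)" using i1C unfolding C_def by auto
      fix k assume k: "Max C < k \<and> k < n \<and> extends_reach y r k"
      show "l (Max C) < l k"
      proof (rule ccontr)
        assume "\<not> l (Max C) < l k"
        then have "y k - r k \<le> z" using i1C unfolding C_def l_def by auto
        moreover have "z \<le> y k + r k"
        proof -
          have "z \<le> y (Max C) + r (Max C)" using i1C unfolding C_def by auto
          also have "\<dots> = reach y r (Suc (Max C))" using extends_reach_Suc i1C unfolding C_def
            by auto
          also have "\<dots> \<le> reach y r k" by (rule reach_on_mono) (use k in simp)
          also have "\<dots> < y k + r k" using k unfolding extends_reach_def by auto
          finally show ?thesis by simp
        qed
        ultimately have "k \<in> C" using k unfolding C_def by auto
        then show False using i1max k by fastforce
      qed
    qed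
    then show "z \<in> (\<Union>i\<in>S. {y i - r i..y i + r i})" using i1C unfolding C_def by auto
  qed
  moreover have "S \<subseteq> {..<n}" unfolding S_def by auto
  ultimately show ?thesis unfolding order_preserving_def using incr by blast
qed

lemma active_covers_beyond:
  assumes act: "active L r y S" and fin: "finite S" and p: "0 \<le> p" "p < L"
  shows "\<exists>j\<in>S. y j - r j \<le> p \<and> p < y j + r j"
proof -
  have cover: "\<exists>j\<in>S. y j - r j \<le> w \<and> w \<le> y j + r j" if "0 \<le> w" "w \<le> L" for w
  proof -
    have "w \<in> {0..L}" using that by simp
    then have "w \<in> (\<Union>j\<in>S. {y j - r j..y j + r j})" using act unfolding active_def by blast
    then show ?thesis by auto
  qed
  define A where "A = {j \<in> S. p < y j + r j}"
  have "A \<noteq> {}" using cover[of L] p unfolding A_def by auto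
  moreover have "finite A" using fin unfolding A_def by simp
  ultimately obtain j0 where "is_arg_min (\<lambda>j. y j - r j) (\<lambda>j. j \<in> A) j0"
    using ex_is_arg_min_if_finite by blast
  then have j0: "j0 \<in> A" "\<And>j. j \<in> A \<Longrightarrow> y j0 - r j0 \<le> y j - r j"
    by (auto simp: is_arg_min_linorder)
  have "y j0 - r j0 \<le> p"
  proof (rule ccontr)
    assume "\<not> y j0 - r j0 \<le> p"
    define w where "w = (p + min (y j0 - r j0) L) / 2"
    have w: "p < w" "w < y j0 - r j0" "w \<le> L" "0 \<le> w"
      using p \<open>\<not> y j0 - r j0 \<le> p\<close> unfolding w_def by auto
    obtain k where "k \<in> S" "y k - r k \<le> w" "w \<le> y k + r k" using cover[OF w(4,3)] by blast
    then show False using j0(2)[of k] w unfolding A_def by auto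
  qed
  then show ?thesis using j0(1) unfolding A_def by auto
qed

text \<open>If the scan over an active order-preserving set \<open>S\<close> stopped at \<open>p < L\<close>, some sensor
  \<open>j\<close> of \<open>S\<close> covering \<open>p\<close> was skipped, and a later sensor of \<open>S\<close> raising the reach over its
  left end would lie strictly to the left of \<open>j\<close>.\<close>

lemma order_preserving_reach_ge:
  assumes L: "L > 0" and op: "order_preserving n L r y"
  shows "reach y r n \<ge> L"
proof -
  obtain S where S: "S \<subseteq> {..<n}" "active L r y S"
    and incr: "\<And>i j. i \<in> S \<Longrightarrow> j \<in> S \<Longrightarrow> i < j \<Longrightarrow> y i < y j"
    using op unfolding order_preserving_def by blast
  define p where "p = reach_on y r S n"
  have "L \<le> p"
  proof (rule ccontr)
    assume "\<not> L \<le> p"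
    moreover have "0 \<le> p" unfolding p_def by (rule reach_on_nonneg)
    moreover have "finite S" using S(1) finite_subset by blast
    ultimately obtain j where j: "j \<in> S" "y j - r j \<le> p" "p < y j + r j"
      using active_covers_beyond[OF S(2)] by fastforce
    have jn: "j < n" using j S(1) by auto
    define q where "q = reach_on y r S j"
    have skipped: "\<not> y j - r j \<le> q"
    proof
      assume "y j - r j \<le> q"
      then have "y j + r j \<le> reach_on y r S (Suc j)" using j(1) by (simp add: q_def reach_step_def)
      also have "\<dots> \<le> p" unfolding p_def by (rule reach_on_mono) (use jn in simp)
      finally show False using j(3) by simp
    qed
    then have "reach_on y r S (Suc j) = q" "q < p" using j(1,2)
      by (simp_all add: q_def reach_step_def)
    then obtain k where k: "Suc j \<le> k" "k < n" "reach_on y r S k \<le> q" "q < reach_on y r S (Suc k)"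
      using reach_on_crossing[of y r S "Suc j" q n] jn unfolding p_def by auto
    then have "k \<in> S" "y k - r k \<le> reach_on y r S k" "reach_on y r S (Suc k) = y k + r k"
      by (auto simp: reach_step_def split: if_splits)
    moreover have "reach_on y r S (Suc k) \<le> p" unfolding p_def
      by (rule reach_on_mono) (use k in simp)
    moreover have "y j < y k" using incr j(1) \<open>k \<in> S\<close> k(1) by simp
    ultimately show False using k(3) skipped j(3) by simp
  qed
  then show ?thesis using reach_on_le_reach[of y r S n] unfolding p_def by simp
qed

lemma order_preserving_feasible: "order_preserving n L r y \<Longrightarrow> feasible n L r y"
  unfolding order_preserving_def feasible_def active_def by blast

lemma feasible_sensors_nonempty: "0 < L \<Longrightarrow> feasible n L r y \<Longrightarrow> 0 < n"
  by (rule ccontr) (simp add: feasible_def active_def)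

section \<open>Integral rounding\<close>

lemma reach_step_image_le:
  fixes \<phi> :: "real \<Rightarrow> real" and k :: int
  assumes mono: "mono \<phi>" and shift: "\<And>v m. \<phi> (v + of_int m) = \<phi> v + of_int m"
  shows "\<phi> (reach_step R v (of_int k)) \<le> reach_step (\<phi> R) (\<phi> v) (of_int k)"
proof (cases "v - of_int k \<le> R")
  case True
  have "\<phi> v - of_int k = \<phi> (v - of_int k)" using shift[of v "- k"] by simp
  also have "\<dots> \<le> \<phi> R" using monoD[OF mono True] .
  finally have "reach_step (\<phi> R) (\<phi> v) (of_int k) = max (\<phi> R) (\<phi> (v + of_int k))"
    using shift[of v k] by (simp add: reach_step_def)
  moreover have "\<phi> (max R (v + of_int k)) \<le> max (\<phi> R) (\<phi> (v + of_int k))"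
    by (simp add: max_def monoD[OF mono])
  ultimately show ?thesis using True by (simp add: reach_step_def)
next
  case False
  then show ?thesis using reach_step_ge[of "\<phi> R"] by (simp add: reach_step_def)
qed

lemma reach_image_le:
  fixes \<phi> :: "real \<Rightarrow> real" and k :: "nat \<Rightarrow> int"
  assumes mono: "mono \<phi>" and shift: "\<And>v m. \<phi> (v + of_int m) = \<phi> v + of_int m"
    and zero: "\<phi> 0 = 0"
  shows "\<phi> (reach y (\<lambda>i. of_int (k i)) i) \<le> reach (\<lambda>j. \<phi> (y j)) (\<lambda>i. of_int (k i)) i"
proof (induction i)
  case (Suc i)
  have "\<phi> (reach y (\<lambda>i. of_int (k i)) (Suc i))
      \<le> reach_step (\<phi> (reach y (\<lambda>i. of_int (k i)) i)) (\<phi> (y i)) (of_int (k i))"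
    using reach_step_image_le[OF mono shift] by simp
  also have "\<dots> \<le> reach (\<lambda>j. \<phi> (y j)) (\<lambda>i. of_int (k i)) (Suc i)"
    using reach_step_mono[OF Suc.IH] by simp
  finally show ?case .
qed (simp add: zero)

lemma has_integral_abs_ceiling_diff:
  "((\<lambda>t. \<bar>real_of_int \<lceil>d - t\<rceil>\<bar>) has_integral \<bar>d\<bar>) {0..1}"
proof -
  define k where "k = \<lfloor>d\<rfloor>"
  define f where "f = frac d"
  have d: "d = of_int k + f" "0 \<le> f" "f < 1"
    unfolding k_def f_def using frac_lt_1[of d] by (simp_all add: frac_def)
  have left: "((\<lambda>t. \<bar>real_of_int \<lceil>d - t\<rceil>\<bar>) has_integral f * \<bar>of_int k + 1\<bar>) {0..f}"
  proof (rule has_integral_spike_finite[where S = "{f}"])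
    show "\<bar>real_of_int \<lceil>d - t\<rceil>\<bar> = \<bar>of_int k + 1\<bar>" if "t \<in> {0..f} - {f}" for t
    proof -
      have "\<lceil>d - t\<rceil> = k + 1" using that d by (intro ceiling_unique) auto
      then show ?thesis by simp
    qed
    show "((\<lambda>t. \<bar>real_of_int k + 1\<bar>) has_integral f * \<bar>of_int k + 1\<bar>) {0..f}"
      using has_integral_const_real[of "\<bar>real_of_int k + 1\<bar>" 0 f] d by simp
  qed simp
  have right: "((\<lambda>t. \<bar>real_of_int \<lceil>d - t\<rceil>\<bar>) has_integral (1 - f) * \<bar>of_int k\<bar>) {f..1}"
  proof (rule has_integral_spike_finite[where S = "{1}"])
    show "\<bar>real_of_int \<lceil>d - t\<rceil>\<bar> = \<bar>of_int k\<bar>" if "t \<in> {f..1} - {1}" for t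
    proof -
      have "\<lceil>d - t\<rceil> = k" using that d by (intro ceiling_unique) auto
      then show ?thesis by simp
    qed
    show "((\<lambda>t. \<bar>real_of_int k\<bar>) has_integral (1 - f) * \<bar>of_int k\<bar>) {f..1}"
      using has_integral_const_real[of "\<bar>real_of_int k\<bar>" f 1] d by simp
  qed simp
  have "f * \<bar>of_int k + 1\<bar> + (1 - f) * \<bar>of_int k\<bar> = \<bar>d\<bar>"
  proof (cases "k \<ge> 0")
    case True
    then show ?thesis using d by (simp add: algebra_simps)
  next
    case False
    then have "real_of_int k \<le> -1" by simp
    then show ?thesis using d by (simp add: algebra_simps)
  qed
  then show ?thesis using has_integral_combine[OF _ _ left right] d by simp
qed

lemma integer_valued_le_integral:
  fixes f :: "real \<Rightarrow> real"
  assumes f: "(f has_integral I) {0..1}" and int: "\<And>t. 0 \<le> t \<Longrightarrow> t < 1 \<Longrightarrow> f t \<in> \<int>"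
  shows "\<exists>t. 0 \<le> t \<and> t < 1 \<and> f t \<le> I"
proof (rule ccontr)
  assume contra: "\<not> ?thesis"
  have above: "real_of_int \<lfloor>I\<rfloor> + 1 \<le> f t" if t: "0 \<le> t" "t < 1" for t
  proof -
    obtain z where z: "f t = of_int z" using int[OF t] by (auto elim: Ints_cases)
    then have "\<lfloor>I\<rfloor> < z" using contra t by (auto simp: floor_less_iff)
    then show ?thesis using z by simp
  qed
  have spiked: "((\<lambda>t. if t = 1 then real_of_int (\<lfloor>I\<rfloor> + 1) else f t) has_integral I) {0..1}"
    by (rule has_integral_spike_finite[where S = "{1}", OF _ _ f]) auto
  have const: "((\<lambda>t::real. real_of_int (\<lfloor>I\<rfloor> + 1)) has_integral real_of_int (\<lfloor>I\<rfloor> + 1)) {0..1}"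
    using has_integral_const_real[of "real_of_int (\<lfloor>I\<rfloor> + 1)" 0 1] by simp
  have "real_of_int (\<lfloor>I\<rfloor> + 1) \<le> I"
    by (rule has_integral_le[OF const spiked]) (auto intro: above)
  then show False by linarith
qed

lemma exists_good_rounding_shift:
  fixes y :: "nat \<Rightarrow> real" and x :: "nat \<Rightarrow> int"
  shows "\<exists>t. 0 \<le> t \<and> t < 1 \<and>
    (\<Sum>i<n. \<bar>of_int \<lceil>y i - t\<rceil> - of_int (x i)\<bar>) \<le> (\<Sum>i<n. \<bar>y i - of_int (x i)\<bar>)"
proof -
  have shifted: "of_int \<lceil>y i - t\<rceil> - of_int (x i) = real_of_int \<lceil>(y i - of_int (x i)) - t\<rceil>" for i t
    by (metis ceiling_diff_of_int diff_diff_eq add.commute of_int_diff)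
  have "((\<lambda>t. \<Sum>i<n. \<bar>of_int \<lceil>y i - t\<rceil> - of_int (x i)\<bar>) has_integral (\<Sum>i<n. \<bar>y i - of_int (x i)\<bar>)) {0..1}"
    unfolding shifted by (intro has_integral_sum has_integral_abs_ceiling_diff) simp
  then show ?thesis by (rule integer_valued_le_integral) (auto intro: Ints_sum)
qed

lemma exists_integral_reach_ge:
  fixes y :: "nat \<Rightarrow> real" and x k :: "nat \<Rightarrow> int"
  assumes "of_int L \<le> reach y (\<lambda>i. of_int (k i)) n"
  shows "\<exists>z :: nat \<Rightarrow> int. of_int L \<le> reach (\<lambda>i. of_int (z i)) (\<lambda>i. of_int (k i)) n \<and>
     (\<Sum>i<n. \<bar>of_int (z i) - of_int (x i)\<bar>) \<le> (\<Sum>i<n. \<bar>y i - of_int (x i)\<bar>)"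
proof -
  obtain t where t: "0 \<le> t" "t < 1"
    "(\<Sum>i<n. \<bar>of_int \<lceil>y i - t\<rceil> - of_int (x i)\<bar>) \<le> (\<Sum>i<n. \<bar>y i - of_int (x i)\<bar>)"
    using exists_good_rounding_shift by blast
  define \<phi> where "\<phi> v = real_of_int \<lceil>v - t\<rceil>" for v
  have mono: "mono \<phi>" unfolding \<phi>_def by (auto intro!: monoI ceiling_mono)
  have shift: "\<phi> (v + of_int m) = \<phi> v + of_int m" for v m
    unfolding \<phi>_def by (metis add.commute add_diff_eq ceiling_add_of_int of_int_add)
  have zero: "\<phi> 0 = 0" unfolding \<phi>_def using t by (simp add: ceiling_unique)
  have "of_int L = \<phi> (of_int L)" using shift[of 0 L] zero by simp
  also have "\<dots> \<le> \<phi> (reach y (\<lambda>i. of_int (k i)) n)" using monoD[OF mono assms] .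
  also have "\<dots> \<le> reach (\<lambda>j. \<phi> (y j)) (\<lambda>i. of_int (k i)) n"
    by (rule reach_image_le[OF mono shift zero])
  finally show ?thesis using t(3) unfolding \<phi>_def
    by (intro exI[of _ "\<lambda>i. \<lceil>y i - t\<rceil>"]) simp
qed

section \<open>The dynamic programming table\<close>

text \<open>Putting a sensor of radius \<open>rv\<close> at an integer position at distance at most \<open>k\<close> from
  \<open>xv\<close> extends a covered prefix \<open>[0, p]\<close> furthest at \<open>extend_pos\<close>, reaching \<open>extend_reach\<close>;
  when no such position meets \<open>[0, p]\<close> the sensor stays at \<open>xv\<close>.\<close>

definition extend_pos :: "int \<Rightarrow> int \<Rightarrow> int \<Rightarrow> int \<Rightarrow> int" where
  "extend_pos p k xv rv = (if p + rv - (xv - k) < 0 then xv else min (xv + k) (p + rv))"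

definition extend_reach :: "int \<Rightarrow> int \<Rightarrow> int \<Rightarrow> int \<Rightarrow> int" where
  "extend_reach p k xv rv =
     (if p + rv - (xv - k) < 0 then p else max p (min (xv + k) (p + rv) + rv))"

lemma extend_reach_ge: "p \<le> extend_reach p k xv rv"
  by (simp add: extend_reach_def)

lemma extend_pos_dist: "0 \<le> k \<Longrightarrow> \<bar>extend_pos p k xv rv - xv\<bar> \<le> k"
  by (auto simp: extend_pos_def)

lemma reach_step_extend_pos: "0 \<le> k \<Longrightarrow>
  reach_step p (extend_pos p k xv rv) rv = extend_reach p k xv rv"
  by (auto simp: reach_step_def extend_pos_def extend_reach_def max_def min_def)

lemma reach_step_le_extend_reach:
  "\<bar>z - xv\<bar> \<le> k \<Longrightarrow> reach_step p z rv \<le> extend_reach p k xv rv"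
  by (auto simp: reach_step_def extend_reach_def)

text \<open>The running maximum of \<open>f 0, \<dots>, f (K - 1)\<close> together with the first index attaining
  it, exactly as the inner loop of the program maintains them; \<open>-1\<close> lies below every reach.\<close>

fun prefix_argmax :: "(nat \<Rightarrow> int) \<Rightarrow> nat \<Rightarrow> int \<times> nat" where
  "prefix_argmax f 0 = (-1, 0)"
| "prefix_argmax f (Suc k) =
     (if fst (prefix_argmax f k) - f k < 0 then (f k, k) else prefix_argmax f k)"

lemma prefix_argmax_ge: "(\<forall>k<K. 0 \<le> f k) \<Longrightarrow> j < K \<Longrightarrow> f j \<le> fst (prefix_argmax f K)"
  by (induction K) (auto simp: less_Suc_eq)

lemma prefix_argmax_attained:
  "(\<forall>k<K. 0 \<le> f k) \<Longrightarrow> 0 < K \<Longrightarrow>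
     f (snd (prefix_argmax f K)) = fst (prefix_argmax f K) \<and> snd (prefix_argmax f K) < K"
  by (induction K) (auto simp: less_Suc_eq)

text \<open>\<open>reach_table x r i c\<close> is the largest reach of the first \<open>i\<close> sensors at integer positions
  with total displacement at most \<open>c\<close>; \<open>reach_table_arg x r i c\<close> is the displacement an
  optimal choice gives to sensor \<open>i - 1\<close>.\<close>

fun reach_table :: "(nat \<Rightarrow> int) \<Rightarrow> (nat \<Rightarrow> int) \<Rightarrow> nat \<Rightarrow> nat \<Rightarrow> int" where
  "reach_table x r 0 c = 0"
| "reach_table x r (Suc i) c =
     fst (prefix_argmax (\<lambda>k. extend_reach (reach_table x r i (c - k)) (int k) (x i) (r i)) (Suc c))"

definition reach_table_arg :: "(nat \<Rightarrow> int) \<Rightarrow> (nat \<Rightarrow> int) \<Rightarrow> nat \<Rightarrow> nat \<Rightarrow> nat" where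
  "reach_table_arg x r i c = snd (prefix_argmax
     (\<lambda>k. extend_reach (reach_table x r (i - 1) (c - k)) (int k) (x (i - 1)) (r (i - 1))) (Suc c))"

lemma reach_table_nonneg: "0 \<le> reach_table x r i c"
proof (induction i arbitrary: c)
  case (Suc i)
  have "\<forall>k<Suc c. 0 \<le> extend_reach (reach_table x r i (c - k)) (int k) (x i) (r i)"
    using Suc extend_reach_ge order_trans by blast
  then show ?case using prefix_argmax_ge[of "Suc c" _ 0] by force
qed simp

lemma candidates_nonneg: "\<forall>k<Suc c. 0 \<le> extend_reach (reach_table x r i (c - k)) (int k) (x i) (r i)"
  using reach_table_nonneg extend_reach_ge order_trans by blast

lemma reach_table_arg_attains:
  "reach_table_arg x r (Suc i) c \<le> c \<and>
   extend_reach (reach_table x r i (c - reach_table_arg x r (Suc i) c))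
     (int (reach_table_arg x r (Suc i) c)) (x i) (r i) = reach_table x r (Suc i) c"
  using prefix_argmax_attained[OF candidates_nonneg[where x = x and r = r and i = i and c = c]]
  unfolding reach_table_arg_def by simp

lemma reach_table_arg_le: "0 < i \<Longrightarrow> reach_table_arg x r i c \<le> c"
  using reach_table_arg_attains[of x r "i - 1" c] by simp

lemma extend_reach_le_reach_table:
  "k \<le> c \<Longrightarrow> extend_reach (reach_table x r i (c - k)) (int k) (x i) (r i) \<le> reach_table x r (Suc i) c"
  using prefix_argmax_ge[OF candidates_nonneg, of k] by simp

lemma reach_le_reach_table:
  fixes z x r :: "nat \<Rightarrow> int"
  assumes "(\<Sum>j<i. \<bar>z j - x j\<bar>) \<le> int c"
  shows "reach (\<lambda>j. of_int (z j)) (\<lambda>j. of_int (r j)) i \<le> of_int (reach_table x r i c)"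
  using assms
proof (induction i arbitrary: c)
  case (Suc i)
  define k where "k = nat \<bar>z i - x i\<bar>"
  have "0 \<le> (\<Sum>j<i. \<bar>z j - x j\<bar>)" by (simp add: sum_nonneg)
  moreover have "(\<Sum>j<i. \<bar>z j - x j\<bar>) + \<bar>z i - x i\<bar> \<le> int c" using Suc.prems by simp
  ultimately have "\<bar>z i - x i\<bar> \<le> int c" "(\<Sum>j<i. \<bar>z j - x j\<bar>) \<le> int c - \<bar>z i - x i\<bar>"
    by linarith+
  then have kc: "k \<le> c" and "(\<Sum>j<i. \<bar>z j - x j\<bar>) \<le> int (c - k)"
    unfolding k_def by (simp_all add: of_nat_diff)
  note IH = Suc.IH[OF this(2)]
  have "reach (\<lambda>j. of_int (z j)) (\<lambda>j. of_int (r j)) (Suc i)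
      \<le> of_int (reach_step (reach_table x r i (c - k)) (z i) (r i))"
    using reach_step_mono[OF IH] by (simp add: of_int_reach_step)
  also have "\<dots> \<le> of_int (extend_reach (reach_table x r i (c - k)) (int k) (x i) (r i))"
    by (simp add: reach_step_le_extend_reach k_def)
  also have "\<dots> \<le> of_int (reach_table x r (Suc i) c)"
    using extend_reach_le_reach_table[OF kc] by simp
  finally show ?case .
qed simp

text \<open>Rounding the solution to an integral one of cost \<open>c\<close> at most its own, column \<open>c\<close> of the
  table reaches \<open>L\<close>.\<close>

lemma reach_table_lower_bound:
  fixes y :: "nat \<Rightarrow> real"
  assumes "0 < L" "order_preserving n (of_int L) (\<lambda>i. of_int (r i)) y"
  obtains c where "L \<le> reach_table x r n c" "real c \<le> cost n (\<lambda>i. of_int (x i)) y"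
proof -
  have "of_int L \<le> reach y (\<lambda>i. of_int (r i)) n"
    using order_preserving_reach_ge assms by simp
  then obtain z :: "nat \<Rightarrow> int" where z: "of_int L \<le> reach (\<lambda>i. of_int (z i)) (\<lambda>i. of_int (r i)) n"
    and cost: "(\<Sum>i<n. \<bar>of_int (z i) - of_int (x i)\<bar>) \<le> (\<Sum>i<n. \<bar>y i - of_int (x i)\<bar>)"
    using exists_integral_reach_ge[where x = x] by blast
  define c where "c = nat (\<Sum>i<n. \<bar>z i - x i\<bar>)"
  have c: "int c = (\<Sum>i<n. \<bar>z i - x i\<bar>)" unfolding c_def by (simp add: sum_nonneg)
  have "real_of_int L \<le> of_int (reach_table x r n c)"
    using z reach_le_reach_table[of z x n c r] c by simp
  moreover have "real c = (\<Sum>i<n. \<bar>of_int (z i) - of_int (x i)\<bar>)"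
    using arg_cong[OF c, of real_of_int] by simp
  ultimately show ?thesis using that cost unfolding cost_def by simp
qed

lemma exists_first_reaching_column:
  fixes y :: "nat \<Rightarrow> real"
  assumes "0 < L" "order_preserving n (of_int L) (\<lambda>i. of_int (r i)) y"
  obtains cs where "\<forall>c<cs. reach_table x r n c < L" "L \<le> reach_table x r n cs"
proof
  obtain c where "L \<le> reach_table x r n c" using reach_table_lower_bound[OF assms] by blast
  then show "L \<le> reach_table x r n (LEAST c. L \<le> reach_table x r n c)" by (rule LeastI)
  show "\<forall>c<(LEAST c. L \<le> reach_table x r n c). reach_table x r n c < L"
  proof (intro allI impI)
    fix c assume "c < (LEAST c. L \<le> reach_table x r n c)"
    then have "\<not> L \<le> reach_table x r n c" by (rule not_less_Least)
    then show "reach_table x r n c < L" by simp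
  qed
qed

lemma first_reaching_column_le_cost:
  fixes y :: "nat \<Rightarrow> real"
  assumes "0 < L" "\<forall>c<cs. reach_table x r n c < L"
    and "order_preserving n (of_int L) (\<lambda>i. of_int (r i)) y"
  shows "real cs \<le> cost n (\<lambda>i. of_int (x i)) y"
proof -
  obtain c where c: "L \<le> reach_table x r n c" "real c \<le> cost n (\<lambda>i. of_int (x i)) y"
    using reach_table_lower_bound[OF assms(1,3)] .
  have "cs \<le> c"
  proof (rule ccontr)
    assume "\<not> cs \<le> c"
    then have "reach_table x r n c < L" using assms(2) by simp
    then show False using c(1) by simp
  qed
  then show ?thesis using c(2) by simp
qed

locale barrier_instance =
  fixes n :: nat and L :: int and x r :: "nat \<Rightarrow> int"
begin

text \<open>The traceback starts at column \<open>cs\<close> of row \<open>n\<close>; \<open>trace_back cs d\<close> is its column after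
  \<open>d\<close> steps, i.e. at row \<open>n - d\<close>, and \<open>trace_col cs i\<close> its column at row \<open>i\<close>.\<close>

fun trace_back :: "nat \<Rightarrow> nat \<Rightarrow> nat" where
  "trace_back cs 0 = cs"
| "trace_back cs (Suc d) = trace_back cs d - reach_table_arg x r (n - d) (trace_back cs d)"

definition trace_col :: "nat \<Rightarrow> nat \<Rightarrow> nat" where "trace_col cs m = trace_back cs (n - m)"

lemma trace_col_n: "trace_col cs n = cs" by (simp add: trace_col_def)

lemma trace_col_pred:
  "0 < m \<Longrightarrow> m \<le> n \<Longrightarrow> trace_col cs (m - 1) = trace_col cs m - reach_table_arg x r m (trace_col cs m)"
proof -
  assume "0 < m" "m \<le> n"
  then have "n - (m - 1) = Suc (n - m)" "n - (n - m) = m" by auto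
  then show ?thesis unfolding trace_col_def by simp
qed

lemma trace_back_le: "trace_back cs d \<le> cs" by (induction d) auto

lemma trace_col_le: "trace_col cs m \<le> cs" unfolding trace_col_def by (rule trace_back_le)

definition trace_pos :: "nat \<Rightarrow> nat \<Rightarrow> int" where
  "trace_pos cs i = extend_pos (reach_table x r i (trace_col cs i))
     (int (reach_table_arg x r (Suc i) (trace_col cs (Suc i)))) (x i) (r i)"

lemma trace_col_Suc_eq:
  assumes "i < n"
  shows "trace_col cs (Suc i) = trace_col cs i + reach_table_arg x r (Suc i) (trace_col cs (Suc i))"
    and "trace_col cs i = trace_col cs (Suc i) - reach_table_arg x r (Suc i) (trace_col cs (Suc i))"
proof -
  show pred: "trace_col cs i = trace_col cs (Suc i) - reach_table_arg x r (Suc i) (trace_col cs (Suc i))"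
    using trace_col_pred[of "Suc i" cs] assms by simp
  show "trace_col cs (Suc i) = trace_col cs i + reach_table_arg x r (Suc i) (trace_col cs (Suc i))"
    unfolding pred using reach_table_arg_le[of "Suc i" x r "trace_col cs (Suc i)"] by simp
qed

lemma trace_pos_cost: "i \<le> n \<Longrightarrow> (\<Sum>j<i. \<bar>trace_pos cs j - x j\<bar>) \<le> int (trace_col cs i)"
proof (induction i)
  case (Suc i)
  define K where "K = reach_table_arg x r (Suc i) (trace_col cs (Suc i))"
  have "trace_col cs (Suc i) = trace_col cs i + K"
    using trace_col_Suc_eq(1)[of i cs] Suc.prems unfolding K_def by simp
  moreover have "\<bar>trace_pos cs i - x i\<bar> \<le> int K"
    unfolding trace_pos_def K_def[symmetric] by (rule extend_pos_dist) simp
  ultimately show ?case using Suc by simp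
qed simp

lemma trace_pos_reach:
  "i \<le> n \<Longrightarrow> of_int (reach_table x r i (trace_col cs i))
     \<le> reach (\<lambda>j. of_int (trace_pos cs j)) (\<lambda>j. of_int (r j)) i"
proof (induction i)
  case (Suc i)
  define p where "p = reach_table x r i (trace_col cs i)"
  define K where "K = reach_table_arg x r (Suc i) (trace_col cs (Suc i))"
  have "extend_reach p (int K) (x i) (r i) = reach_table x r (Suc i) (trace_col cs (Suc i))"
    using reach_table_arg_attains[of x r i "trace_col cs (Suc i)"] trace_col_Suc_eq(2)[of i cs] Suc.prems
    unfolding p_def K_def by simp
  then have "of_int (reach_table x r (Suc i) (trace_col cs (Suc i)))
      = reach_step (of_int p) (of_int (trace_pos cs i)) (of_int (r i) :: real)"
    unfolding trace_pos_def p_def[symmetric] K_def[symmetric]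
    by (simp flip: reach_step_extend_pos of_int_reach_step)
  also have "\<dots> \<le> reach (\<lambda>j. of_int (trace_pos cs j)) (\<lambda>j. of_int (r j)) (Suc i)"
    using reach_step_mono[OF Suc.IH] Suc.prems unfolding p_def by simp
  finally show ?case .
qed simp

lemma traced_solution_optimal:
  fixes y :: "nat \<Rightarrow> real"
  assumes L: "0 < L" and minimal: "\<forall>c<cs. reach_table x r n c < L"
    and reached: "L \<le> reach_table x r n cs"
    and y: "\<And>i. i < n \<Longrightarrow> y i = of_int (trace_pos cs i)"
  shows "order_preserving n (of_int L) (\<lambda>i. of_int (r i)) y"
    and "cost n (\<lambda>i. of_int (x i)) y = real cs"
    and "opt_op n (of_int L) (\<lambda>i. of_int (x i)) (\<lambda>i. of_int (r i)) = real cs"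
proof -
  let ?r = "\<lambda>i. real_of_int (r i)" and ?x = "\<lambda>i. real_of_int (x i)"
  have "of_int L \<le> real_of_int (reach_table x r n (trace_col cs n))"
    using reached by (simp add: trace_col_n)
  also have "\<dots> \<le> reach y ?r n"
    using trace_pos_reach[of n cs] reach_cong[of n y "\<lambda>j. of_int (trace_pos cs j)"] y by simp
  finally show op: "order_preserving n (of_int L) ?r y"
    using reach_ge_order_preserving L by simp
  have "cost n ?x y = of_int (\<Sum>i<n. \<bar>trace_pos cs i - x i\<bar>)"
    unfolding cost_def using y by simp
  also have "\<dots> \<le> real_of_int (int cs)"
    using trace_pos_cost[of n cs] trace_col_n by (simp only: of_int_le_iff order_refl)
  finally show cost: "cost n ?x y = real cs"
    using first_reaching_column_le_cost[OF L minimal op] by simp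
  show "opt_op n (of_int L) ?x ?r = real cs"
    unfolding opt_op_def
  proof (rule cInf_eq_minimum)
    show "real cs \<in> {cost n ?x y |y. feasible n (of_int L) ?r y \<and>
      order_preserving n (of_int L) ?r y}"
      using op cost order_preserving_feasible[OF op] by (intro CollectI exI[of _ y]) simp
  qed (use first_reaching_column_le_cost[OF L minimal] in blast)
qed

end

section \<open>The RAM program\<close>

abbreviation ONE :: int where "ONE \<equiv> -1"
abbreviation STRIDE :: int where "STRIDE \<equiv> -2"
abbreviation COST :: int where "COST \<equiv> -3"
abbreviation COL_BASE :: int where "COL_BASE \<equiv> -4"
abbreviation CELL :: int where "CELL \<equiv> -5"
abbreviation X_PTR :: int where "X_PTR \<equiv> -6"
abbreviation R_PTR :: int where "R_PTR \<equiv> -7"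
abbreviation COUNT :: int where "COUNT \<equiv> -8"
abbreviation SHIFT :: int where "SHIFT \<equiv> -9"
abbreviation PREV_CELL :: int where "PREV_CELL \<equiv> -10"
abbreviation BEST :: int where "BEST \<equiv> -11"
abbreviation BEST_SHIFT :: int where "BEST_SHIFT \<equiv> -12"
abbreviation PREV :: int where "PREV \<equiv> -13"
abbreviation XI :: int where "XI \<equiv> -14"
abbreviation RI :: int where "RI \<equiv> -15"
abbreviation TMP1 :: int where "TMP1 \<equiv> -16"
abbreviation TMP2 :: int where "TMP2 \<equiv> -17"
abbreviation VAL :: int where "VAL \<equiv> -18"
abbreviation ZERO :: int where "ZERO \<equiv> -20"
abbreviation Y_PTR :: int where "Y_PTR \<equiv> -21"

text \<open>For \<open>c = 0, 1, \<dots>\<close> the program fills column \<open>c\<close> of the table row by row, maximising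
  \<open>extend_reach\<close> over the displacement \<open>k \<le> c\<close> of the current sensor (addresses 7--51), until
  the last entry of a column reaches \<open>L\<close> (52--58); it then traces the optimal displacements
  back and writes the positions \<open>trace_pos\<close> (59--89).\<close>

definition barrier_prog :: "instr list" where
"barrier_prog = [
  Const ONE 1,
  Add STRIDE 0 0,
  Add STRIDE STRIDE ONE,
  Add STRIDE STRIDE ONE,
  Add COL_BASE STRIDE 0,
  Const COST 0,
  Const ZERO 0,
  \<comment> \<open>7: column head\<close>
  Add CELL COL_BASE ZERO,
  Const X_PTR 2,
  Add R_PTR X_PTR 0,
  Add COUNT 0 ZERO,
  \<comment> \<open>11: row loop head\<close>
  Jz COUNT 52,
  Const BEST (-1),
  Const BEST_SHIFT 0,
  Const SHIFT 0,
  Add PREV_CELL CELL ZERO,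
  Load XI X_PTR,
  Load RI R_PTR,
  \<comment> \<open>18: displacement loop head\<close>
  Sub TMP1 COST SHIFT,
  Jneg TMP1 43,
  Load PREV PREV_CELL,
  Add TMP1 PREV RI,
  Sub TMP2 XI SHIFT,
  Sub TMP2 TMP1 TMP2,
  Jneg TMP2 34,
  Add TMP2 XI SHIFT,
  Sub VAL TMP2 TMP1,
  Jneg VAL 30,
  Add VAL TMP1 RI,
  Jmp 31,
  \<comment> \<open>30\<close>
  Add VAL TMP2 RI,
  \<comment> \<open>31\<close>
  Sub TMP2 VAL PREV,
  Jneg TMP2 34,
  Jmp 35,
  \<comment> \<open>34\<close>
  Add VAL PREV ZERO,
  \<comment> \<open>35\<close>
  Sub TMP2 BEST VAL,
  Jneg TMP2 38,
  Jmp 40,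
  \<comment> \<open>38\<close>
  Add BEST VAL ZERO,
  Add BEST_SHIFT SHIFT ZERO,
  \<comment> \<open>40\<close>
  Add SHIFT SHIFT ONE,
  Sub PREV_CELL PREV_CELL STRIDE,
  Jmp 18,
  \<comment> \<open>43: displacement loop end\<close>
  Add CELL CELL ONE,
  Add CELL CELL ONE,
  Store CELL BEST,
  Add TMP1 CELL ONE,
  Store TMP1 BEST_SHIFT,
  Add X_PTR X_PTR ONE,
  Add R_PTR R_PTR ONE,
  Sub COUNT COUNT ONE,
  Jmp 11,
  \<comment> \<open>52: check\<close>
  Load TMP1 CELL,
  Sub TMP1 TMP1 1,
  Jneg TMP1 56,
  Jmp 59,
  \<comment> \<open>56\<close>
  Add COST COST ONE,
  Add COL_BASE COL_BASE STRIDE,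
  Jmp 7,
  \<comment> \<open>59: traceback\<close>
  Add COUNT 0 ZERO,
  Add Y_PTR R_PTR 0,
  \<comment> \<open>61\<close>
  Jz COUNT 90,
  Sub COUNT COUNT ONE,
  Sub X_PTR X_PTR ONE,
  Sub R_PTR R_PTR ONE,
  Sub Y_PTR Y_PTR ONE,
  Add TMP1 CELL ONE,
  Load SHIFT TMP1,
  Load XI X_PTR,
  Load RI R_PTR,
  Sub CELL CELL ONE,
  Sub CELL CELL ONE,
  Add TMP2 SHIFT ZERO,
  \<comment> \<open>73\<close>
  Jz TMP2 77,
  Sub CELL CELL STRIDE,
  Sub TMP2 TMP2 ONE,
  Jmp 73,
  \<comment> \<open>77\<close>
  Load PREV CELL,
  Add TMP1 PREV RI,
  Sub VAL XI SHIFT,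
  Sub VAL TMP1 VAL,
  Jneg VAL 87,
  Add VAL XI SHIFT,
  Sub TMP2 VAL TMP1,
  Jneg TMP2 88,
  Add VAL TMP1 ZERO,
  Jmp 88,
  \<comment> \<open>87\<close>
  Add VAL XI ZERO,
  \<comment> \<open>88\<close>
  Store Y_PTR VAL,
  Jmp 61,
  \<comment> \<open>90\<close>
  Halt]"

definition reaches_within :: "instr list \<Rightarrow> nat \<Rightarrow> (mem \<Rightarrow> bool) \<Rightarrow> config \<Rightarrow> nat \<Rightarrow> bool" where
  "reaches_within P pc' R s b \<longleftrightarrow>
     (\<exists>t\<le>b. fst ((step P ^^ t) s) = pc' \<and> R (snd ((step P ^^ t) s)))"

lemma reaches_within_here: "R M \<Longrightarrow> reaches_within P pc R (pc, M) b"
  unfolding reaches_within_def by (intro exI[of _ 0]) auto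

lemma reaches_within_step:
  assumes "pc < length P" "P ! pc \<noteq> Halt" "0 < b"
    and "reaches_within P pc' R (exec_instr (P ! pc) (pc, M)) (b - 1)"
  shows "reaches_within P pc' R (pc, M) b"
proof -
  obtain t where "t \<le> b - 1" "fst ((step P ^^ t) (exec_instr (P ! pc) (pc, M))) = pc'"
    "R (snd ((step P ^^ t) (exec_instr (P ! pc) (pc, M))))"
    using assms(4) unfolding reaches_within_def by blast
  moreover have "step P (pc, M) = exec_instr (P ! pc) (pc, M)"
    using assms(1,2) by (simp add: step_def halted_def)
  ultimately show ?thesis using assms(3) unfolding reaches_within_def
    by (intro exI[of _ "Suc t"]) (simp add: funpow_Suc_right del: funpow.simps)
qed

lemma reaches_within_mono:
  "reaches_within P pc R s b \<Longrightarrow> b \<le> b' \<Longrightarrow> (\<And>M. R M \<Longrightarrow> R' M) \<Longrightarrow> reaches_within P pc R' s b'"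
  unfolding reaches_within_def using le_trans by blast

lemma reaches_within_trans:
  assumes first: "reaches_within P pc1 R s b1"
    and "\<And>M. R M \<Longrightarrow> reaches_within P pc2 R' (pc1, M) b2"
  shows "reaches_within P pc2 R' s (b1 + b2)"
proof -
  obtain t M where t: "t \<le> b1" "(step P ^^ t) s = (pc1, M)" "R M"
    using first unfolding reaches_within_def by (metis prod.collapse)
  then obtain t' where "t' \<le> b2" "fst ((step P ^^ t') (pc1, M)) = pc2"
    "R' (snd ((step P ^^ t') (pc1, M)))"
    using assms(2) unfolding reaches_within_def by blast
  then show ?thesis unfolding reaches_within_def using t
    by (intro exI[of _ "t' + t"]) (simp add: funpow_add)
qed

text \<open>Registers live at negative addresses. These rules let the simplifier tell them apart
  from the nonnegative data addresses during symbolic execution.\<close>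

lemma reg_neq:
  fixes a :: int
  assumes "0 \<le> a"
  shows "(a = - 1) \<longleftrightarrow> False" "(- 1 = a) \<longleftrightarrow> False"
    and "(a = - numeral w) \<longleftrightarrow> False" "(- numeral w = a) \<longleftrightarrow> False"
    and "(1 + a = 0) \<longleftrightarrow> False" "(a + 1 = 0) \<longleftrightarrow> False"
    and "(numeral w + a = 0) \<longleftrightarrow> False" "(a + numeral w = 0) \<longleftrightarrow> False"
  using assms by (auto simp: add_eq_0_iff add.commute[of a])

section \<open>Correctness and running time of the program\<close>

text \<open>Memory layout: the input occupies addresses \<open>0 .. 2n+1\<close>, the output \<open>2n+2 .. 3n+1\<close>, and
  from \<open>table_base = 3n+2\<close> on each column of the table is a block of \<open>stride = 2n+2\<close> cells,
  row \<open>j\<close> of column \<open>c\<close> holding \<open>reach_table x r j c\<close> at \<open>cell c j\<close> and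
  \<open>reach_table_arg x r j c\<close> right after it.\<close>

context barrier_instance
begin

definition "N = int n"
definition "stride = 2 * N + 2"
definition "table_base = 3 * N + 2"
definition cell :: "nat \<Rightarrow> nat \<Rightarrow> int" where "cell c j = table_base + int c * stride + 2 * int j"

definition table_filled :: "mem \<Rightarrow> nat \<Rightarrow> nat \<Rightarrow> bool" where
  "table_filled M c i \<longleftrightarrow>
    (\<forall>a. 0 \<le> a \<and> a < table_base \<longrightarrow> M a = input_mem n L x r a) \<and>
    (\<forall>c' j. 1 \<le> j \<and> j \<le> n \<and> (c' < c \<or> c' = c \<and> j \<le> i) \<longrightarrow>
        M (cell c' j) = reach_table x r j c' \<and> M (cell c' j + 1) = int (reach_table_arg x r j c')) \<and>
    (\<forall>c'\<le>c. M (cell c' 0) = 0) \<and>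
    (\<forall>a. cell c i + 2 \<le> a \<longrightarrow> M a = 0)"

lemma N_nonneg[simp]: "0 \<le> N" by (simp add: N_def)

lemma table_base_pos: "table_base > 0" by (simp add: table_base_def N_def)

lemma cell_pos: "cell c j > 0" unfolding cell_def stride_def N_def table_base_def
  by (smt (verit) of_nat_0_le_iff mult_nonneg_nonneg)

lemma cell_nonneg[simp]: "0 \<le> cell c j" using cell_pos[of c j] by simp

lemma cell_neq_reg [simp]:
  "cell c j = - numeral w \<longleftrightarrow> False" "- numeral w = cell c j \<longleftrightarrow> False"
  "cell c j = - 1 \<longleftrightarrow> False" "- 1 = cell c j \<longleftrightarrow> False"
  using cell_pos[of c j] by auto

lemma table_filled_upd: "a < 0 \<Longrightarrow> table_filled M c i \<Longrightarrow> table_filled (M(a := v)) c i"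
proof -
  assume a: "a < 0" "table_filled M c i"
  have "\<forall>c j. a \<noteq> cell c j \<and> a \<noteq> cell c j + 1" using cell_pos a(1)
    by (metis add.commute add_nonneg_nonneg le_add_same_cancel2 le_less linorder_not_le zero_le_one)
  moreover have "a < cell c i + 2" using cell_pos[of c i] a(1) by simp
  ultimately show ?thesis using a unfolding table_filled_def by auto
qed

definition candidate :: "nat \<Rightarrow> nat \<Rightarrow> nat \<Rightarrow> int" where
  "candidate c i k = extend_reach (reach_table x r i (c - k)) (int k) (x i) (r i)"

definition inner_inv :: "mem \<Rightarrow> nat \<Rightarrow> nat \<Rightarrow> nat \<Rightarrow> bool" where
  "inner_inv M c i k \<longleftrightarrow> M ONE = 1 \<and> M STRIDE = stride \<and> M COST = int c \<and> M COL_BASE = cell c 0 \<and>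
  M ZERO = 0 \<and>
     M CELL = cell c i \<and> M X_PTR = 2 + int i \<and> M R_PTR = 2 + N + int i \<and> M COUNT = N - int i \<and>
     table_filled M c i \<and> M SHIFT = int k \<and> M PREV_CELL = cell c i - int k * stride \<and> M XI = x i \<and>
       M RI = r i \<and>
     M BEST = fst (prefix_argmax (candidate c i) k) \<and>
       M BEST_SHIFT = int (snd (prefix_argmax (candidate c i) k))"

lemma cell_shift: "k \<le> c \<Longrightarrow> cell c i - int k * stride = cell (c - k) i"
  unfolding cell_def by (simp add: of_nat_diff algebra_simps)

lemma cell_shift_stride: "k \<le> c \<Longrightarrow> cell (c - k) i - stride = cell c i - (1 + int k) * stride"
  unfolding cell_def by (simp add: of_nat_diff algebra_simps)

lemma table_filled_read:
  assumes filled: "table_filled M c i" and "k \<le> c" "i \<le> n"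
  shows "M (cell (c - k) i) = reach_table x r i (c - k)"
proof (cases "i = 0")
  case True
  then show ?thesis using assms unfolding table_filled_def by simp
next
  case False
  have "\<forall>c' j. 1 \<le> j \<and> j \<le> n \<and> (c' < c \<or> c' = c \<and> j \<le> i) \<longrightarrow>
      M (cell c' j) = reach_table x r j c' \<and> M (cell c' j + 1) = int (reach_table_arg x r j c')"
    using filled unfolding table_filled_def by blast
  from this[rule_format, of i "c - k"] show ?thesis using False assms(2,3) by (cases "k = 0") auto
qed

lemma inner_body:
  assumes inv: "inner_inv M c i k" and kc: "k \<le> c" and iN: "i < n"
  shows "reaches_within barrier_prog 18 (\<lambda>M'. inner_inv M' c i (Suc k)) (18, M) 25"
proof -
  have rd: "M (cell (c - k) i) = reach_table x r i (c - k)"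
    using inv kc iN by (simp add: inner_inv_def table_filled_read)
  have kc': "\<not> (int c - int k < 0)" "\<not> c < k" using kc by auto
  from inv have f: "M ONE = 1" "M STRIDE = stride" "M COST = int c" "M COL_BASE = cell c 0"
    "M ZERO = 0"
    "M CELL = cell c i" "M X_PTR = 2 + int i" "M R_PTR = 2 + N + int i" "M COUNT = N - int i"
    "table_filled M c i" "M SHIFT = int k" "M PREV_CELL = cell (c - k) i" "M XI = x i" "M RI = r i"
     "M BEST = fst (prefix_argmax (candidate c i) k)"
     "M BEST_SHIFT = int (snd (prefix_argmax (candidate c i) k))"
    unfolding inner_inv_def by (auto simp: cell_shift kc)
  show ?thesis
    apply (rule reaches_within_step, simp_all add: barrier_prog_def f rd kc kc' split: if_split)
    apply ((rule reaches_within_here, simp add: inner_inv_def f table_filled_upd candidate_def extend_reach_def cell_shift_stride kc)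
        | rule conjI | rule impI
        | (rule reaches_within_step, simp_all add: barrier_prog_def f rd kc' split: if_split))+
    done
qed

lemma inner_exit:
  assumes inv: "inner_inv M c i (Suc c)"
  shows "reaches_within barrier_prog 43 (\<lambda>M'. inner_inv M' c i (Suc c)) (18, M) 2"
proof -
  from inv have f: "M COST = int c" "M SHIFT = int (Suc c)" unfolding inner_inv_def by auto
  show ?thesis
    apply ((rule reaches_within_here, force simp: inner_inv_def inv[unfolded inner_inv_def] table_filled_upd)
        | rule conjI | rule impI
        | (rule reaches_within_step, simp_all add: barrier_prog_def f split: if_split))+
    done
qed

lemma inner_loop: "inner_inv M c i k \<Longrightarrow> k \<le> Suc c \<Longrightarrow> i < n \<Longrightarrow>
   reaches_within barrier_prog 43 (\<lambda>M'. inner_inv M' c i (Suc c)) (18, M) (25 * (Suc c - k) + 2)"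
proof (induction "Suc c - k" arbitrary: k M)
  case 0
  then have k: "k = Suc c" by simp
  have "25 * (Suc c - k) + 2 = 2" using k by simp
  then show ?case using inner_exit[of M c i] 0(2) k by (simp add: eval_nat_numeral)
next
  case (Suc d)
  then have kc: "k \<le> c" by simp
  have "reaches_within barrier_prog 43 (\<lambda>M'. inner_inv M' c i (Suc c)) (18, M) (25 + (25 * (Suc c - Suc k) + 2))"
    apply (rule reaches_within_trans[OF inner_body[OF Suc.prems(1) kc Suc.prems(3)]])
    apply (rule Suc.hyps)
    using Suc.hyps(2) Suc.prems by auto
  moreover have "25 * (Suc c - k) + 2 = 25 + (25 * (Suc c - Suc k) + 2)" using kc by simp
  ultimately show ?case by (simp only:)
qed

definition row_inv :: "mem \<Rightarrow> nat \<Rightarrow> nat \<Rightarrow> bool" where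
  "row_inv M c i \<longleftrightarrow> M ONE = 1 \<and> M STRIDE = stride \<and> M COST = int c \<and> M COL_BASE = cell c 0 \<and>
  M ZERO = 0 \<and>
     M CELL = cell c i \<and> M X_PTR = 2 + int i \<and> M R_PTR = 2 + N + int i \<and> M COUNT = N - int i \<and>
     table_filled M c i"

lemma input_mem_x: "i < n \<Longrightarrow> input_mem n L x r (2 + int i) = x i"
  unfolding input_mem_def by simp

lemma input_mem_r: "i < n \<Longrightarrow> input_mem n L x r (2 + N + int i) = r i"
  unfolding input_mem_def N_def by simp

lemma table_filled_input: "table_filled M c i \<Longrightarrow> 0 \<le> a \<Longrightarrow> a < table_base \<Longrightarrow> M a = input_mem n L x r a"
  unfolding table_filled_def by blast

lemma row_enter:
  assumes inv: "row_inv M c i" and iN: "i < n"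
  shows "reaches_within barrier_prog 18 (\<lambda>M'. inner_inv M' c i 0) (11, M) 7"
proof -
  from inv have f: "M ONE = 1" "M STRIDE = stride" "M COST = int c" "M COL_BASE = cell c 0"
    "M ZERO = 0"
    "M CELL = cell c i" "M X_PTR = 2 + int i" "M R_PTR = 2 + N + int i" "M COUNT = N - int i"
    "table_filled M c i" unfolding row_inv_def by auto
  define xa where "xa = 2 + int i"
  define ra where "ra = 2 + N + int i"
  have xr: "M xa = x i" "M ra = r i" "0 \<le> xa" "0 \<le> ra" "M X_PTR = xa" "M R_PTR = ra"
    using table_filled_input[OF f(10)] input_mem_x input_mem_r iN f
    by (auto simp: table_base_def N_def xa_def ra_def)
  have cnt: "N - int i \<noteq> 0" "N \<noteq> int i" using iN by (auto simp add: N_def)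
  show ?thesis
    apply ((rule reaches_within_here, force simp: inner_inv_def f table_filled_upd xr xa_def ra_def)
        | rule conjI | rule impI
        | (rule reaches_within_step, simp_all add: barrier_prog_def f(1-6,9,10) xr cnt reg_neq split: if_split))+
    done
qed

lemma cell_Suc: "cell c i + 2 = cell c (Suc i)"
  unfolding cell_def by simp

lemma cell_inj: "j1 \<le> n \<Longrightarrow> j2 \<le> n \<Longrightarrow> e1 \<in> {0,1} \<Longrightarrow> e2 \<in> {0,1} \<Longrightarrow>
   cell c1 j1 + e1 = cell c2 j2 + e2 \<Longrightarrow> c1 = c2 \<and> j1 = j2 \<and> e1 = e2"
proof -
  assume a: "j1 \<le> n" "j2 \<le> n" "e1 \<in> {0,1}" "e2 \<in> {0,1}" "cell c1 j1 + e1 = cell c2 j2 + e2"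
  let ?u1 = "2 * int j1 + e1" and ?u2 = "2 * int j2 + e2"
  have b: "0 \<le> ?u1" "?u1 < stride" "0 \<le> ?u2" "?u2 < stride" using a by (auto simp: stride_def N_def)
  have e: "int c1 * stride + ?u1 = int c2 * stride + ?u2" using a(5) unfolding cell_def by simp
  have "(int c1 * stride + ?u1) div stride = int c1" "(int c2 * stride + ?u2) div stride = int c2"
    using b by (simp_all add: add.commute)
  then have "int c1 = int c2" using e by simp
  then have "c1 = c2" by simp
  with e have u: "?u1 = ?u2" by simp
  have "e1 = ?u1 mod 2" "e2 = ?u2 mod 2" using a(3,4) by auto
  then have "e1 = e2" using u by simp
  then show ?thesis using a \<open>c1 = c2\<close> u by auto
qed

lemma cell_ge: "table_base \<le> cell c j"
  unfolding cell_def stride_def N_def by simp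

lemma table_filled_store:
  fixes u :: int
  assumes m: "table_filled M c i" and iN: "i < n" and neg: "a < 0"
  defines "M' \<equiv> M(cell c (Suc i) := reach_table x r (Suc i) c, a := u,
                  cell c (Suc i) + 1 := int (reach_table_arg x r (Suc i) c))"
  shows "table_filled M' c (Suc i)"
proof -
  let ?A = "cell c (Suc i)"
  have new: "M' ?A = reach_table x r (Suc i) c" "M' (?A + 1) = int (reach_table_arg x r (Suc i) c)"
    using neg cell_pos[of c "Suc i"] unfolding M'_def by auto
  have old: "M' b = M b" if "b \<noteq> ?A" "b \<noteq> ?A + 1" "b \<noteq> a" for b
    using that unfolding M'_def by simp
  have table: "M' (cell c' j) = reach_table x r j c' \<and>
    M' (cell c' j + 1) = int (reach_table_arg x r j c')"
    if h: "1 \<le> j" "j \<le> n" "c' < c \<or> c' = c \<and> j \<le> Suc i" for c' j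
  proof (cases "c' = c \<and> j = Suc i")
    case True then show ?thesis using new by simp
  next
    case False
    have "cell c' j \<noteq> ?A" "cell c' j \<noteq> ?A + 1" "cell c' j + 1 \<noteq> ?A" "cell c' j + 1 \<noteq> ?A + 1"
      using cell_inj[of j "Suc i" 0 0 c' c] cell_inj[of j "Suc i" 0 1 c' c]
        cell_inj[of j "Suc i" 1 0 c' c] cell_inj[of j "Suc i" 1 1 c' c] h iN False by auto
    moreover have "cell c' j \<noteq> a" "cell c' j + 1 \<noteq> a" using neg cell_pos[of c' j] by auto
    moreover have "j \<le> i \<or> c' < c" using h False by auto
    ultimately show ?thesis using m h old unfolding table_filled_def by auto
  qed
  have row0: "M' (cell c' 0) = 0" if "c' \<le> c" for c'
  proof -
    have "cell c' 0 \<noteq> ?A" "cell c' 0 \<noteq> ?A + 1"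
      using cell_inj[of 0 "Suc i" 0 0 c' c] cell_inj[of 0 "Suc i" 0 1 c' c] iN by auto
    moreover have "cell c' 0 \<noteq> a" using neg cell_pos[of c' 0] by auto
    ultimately show ?thesis using old m that unfolding table_filled_def by simp
  qed
  have "M' b = input_mem n L x r b" if "0 \<le> b" "b < table_base" for b
    using m cell_ge[of c "Suc i"] neg that unfolding table_filled_def M'_def by auto
  moreover have "M' b = 0" if "cell c (Suc i) + 2 \<le> b" for b
    using m neg cell_pos[of c "Suc i"] that unfolding table_filled_def cell_Suc[symmetric] M'_def
    by auto
  ultimately show ?thesis using table row0 unfolding table_filled_def by blast
qed

lemma row_store:
  assumes inv: "inner_inv M c i (Suc c)" and iN: "i < n"
  shows "reaches_within barrier_prog 11 (\<lambda>M'. row_inv M' c (Suc i)) (43, M) 9"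
proof -
  from inv have f: "M ONE = 1" "M STRIDE = stride" "M COST = int c" "M COL_BASE = cell c 0"
    "M ZERO = 0"
    "M CELL = cell c i" "M X_PTR = 2 + int i" "M R_PTR = 2 + N + int i" "M COUNT = N - int i"
    "table_filled M c i" "M BEST = reach_table x r (Suc i) c"
    "M BEST_SHIFT = int (reach_table_arg x r (Suc i) c)"
    unfolding inner_inv_def candidate_def reach_table_arg_def by auto
  define tv where "tv = reach_table x r (Suc i) c"
  define kv where "kv = int (reach_table_arg x r (Suc i) c)"
  have f2: "M BEST = tv" "M BEST_SHIFT = kv" using f by (simp_all add: tv_def kv_def)
  have mk: "table_filled (M(CELL := cell c (Suc i), cell c (Suc i) := tv,
           TMP1 := cell c (Suc i) + 1, cell c (Suc i) + 1 := kv,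
           X_PTR := v1, R_PTR := v2, COUNT := v3)) c (Suc i)" for v1 v2 v3
    unfolding tv_def kv_def
    by (intro table_filled_upd table_filled_store iN f(10)) auto
  have a2: "cell c i + 1 + 1 = cell c (Suc i)" "cell c i + 2 = cell c (Suc i)"
    "2 + cell c i = cell c (Suc i)"
    using cell_Suc[of c i] by auto
  show ?thesis
    apply ((rule reaches_within_here, simp add: row_inv_def f(1-10) reg_neq mk)
        | rule conjI | rule impI
        | (rule reaches_within_step, simp_all add: barrier_prog_def f(1-10) f2 a2 reg_neq split: if_split))+
    done
qed

lemma row_body:
  assumes inv: "row_inv M c i" and iN: "i < n"
  shows "reaches_within barrier_prog 11 (\<lambda>M'. row_inv M' c (Suc i)) (11, M) (7 + (25 * Suc c + 2) + 9)"
  apply (rule reaches_within_trans[OF reaches_within_trans[OF row_enter[OF inv iN]]])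
   apply (drule inner_loop[where k = 0]; simp add: iN)
  apply (erule row_store[OF _ iN])
  done

lemma row_exit:
  assumes inv: "row_inv M c n"
  shows "reaches_within barrier_prog 52 (\<lambda>M'. row_inv M' c n) (11, M) 1"
proof -
  have z: "M COUNT = 0" using inv unfolding row_inv_def N_def by simp
  show ?thesis
    apply ((rule reaches_within_here, simp add: inv)
        | rule conjI | rule impI
        | (rule reaches_within_step, simp_all add: barrier_prog_def z split: if_split))+
    done
qed

lemma row_loop: "row_inv M c i \<Longrightarrow> i \<le> n \<Longrightarrow>
   reaches_within barrier_prog 52 (\<lambda>M'. row_inv M' c n) (11, M) ((n - i) * (25 * c + 43) + 1)"
proof (induction "n - i" arbitrary: i M)
  case 0
  then have "i = n" by simp
  then show ?case using row_exit 0 by simp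
next
  case (Suc d)
  then have iN: "i < n" by simp
  have "reaches_within barrier_prog 52 (\<lambda>M'. row_inv M' c n) (11, M) ((7 + (25 * Suc c + 2) + 9) + ((n - Suc i) * (25 * c + 43) + 1))"
    apply (rule reaches_within_trans[OF row_body[OF Suc.prems(1) iN]])
    apply (rule Suc.hyps)
    using Suc.hyps(2) iN by auto
  moreover have "n - i = Suc (n - Suc i)" using iN by simp
  then have "(n - i) * (25 * c + 43) + 1 = (7 + (25 * Suc c + 2) + 9) + ((n - Suc i) * (25 * c + 43) + 1)"
    by simp
  ultimately show ?case by (simp only:)
qed

definition col_inv :: "mem \<Rightarrow> nat \<Rightarrow> bool" where
  "col_inv M c \<longleftrightarrow> M ONE = 1 \<and> M STRIDE = stride \<and> M COST = int c \<and> M COL_BASE = cell c 0 \<and>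
  M ZERO = 0 \<and> table_filled M c 0"

definition filled_inv :: "mem \<Rightarrow> nat \<Rightarrow> bool" where
  "filled_inv M c \<longleftrightarrow> row_inv M c n \<and> L \<le> reach_table x r n c"

lemma col_enter:
  assumes inv: "col_inv M c"
  shows "reaches_within barrier_prog 11 (\<lambda>M'. row_inv M' c 0) (7, M) 4"
proof -
  from inv have f: "M ONE = 1" "M STRIDE = stride" "M COST = int c" "M COL_BASE = cell c 0"
    "M ZERO = 0" "table_filled M c 0"
    unfolding col_inv_def by auto
  have m0: "M 0 = N" using table_filled_input[OF f(6), of 0] table_base_pos
    by (simp add: input_mem_def N_def)
  show ?thesis
    apply ((rule reaches_within_here, simp add: row_inv_def f m0 table_filled_upd)
        | rule conjI | rule impI
        | (rule reaches_within_step, simp_all add: barrier_prog_def f m0 reg_neq split: if_split))+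
    done
qed

lemma cell_next_col: "cell (Suc c) 0 = cell c n + 2"
  unfolding cell_def stride_def N_def by (simp add: algebra_simps)

lemma table_filled_next: "table_filled M c n \<Longrightarrow> table_filled M (Suc c) 0"
  unfolding table_filled_def
  apply (intro conjI)
     apply blast
    apply (simp add: less_Suc_eq, blast)
   apply (metis cell_next_col dual_order.refl le_SucE)
  using cell_next_col
  by (metis add_le_cancel_left dual_order.trans le_add_same_cancel1 zero_le_numeral)

lemma table_filled_L: "table_filled M c i \<Longrightarrow> M 1 = L"
proof -
  assume m: "table_filled M c i"
  have "(1::int) < table_base" using N_nonneg unfolding table_base_def by linarith
  then show ?thesis using table_filled_input[OF m, of 1] by (simp add: input_mem_def)
qed

lemma col_check_next:
  assumes inv: "row_inv M c n" and lt: "reach_table x r n c < L"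
  shows "reaches_within barrier_prog 7 (\<lambda>M'. col_inv M' (Suc c)) (52, M) 6"
proof -
  from inv have f: "M ONE = 1" "M STRIDE = stride" "M COST = int c" "M COL_BASE = cell c 0"
    "M ZERO = 0"
    "M CELL = cell c n" "table_filled M c n"
    unfolding row_inv_def by auto
  have rd: "M (cell c n) = reach_table x r n c" using table_filled_read[OF f(7), of 0] by simp
  have l: "M 1 = L" using table_filled_L[OF f(7)] .
  have nx: "cell c 0 + stride = cell (Suc c) 0" unfolding cell_def by (simp add: algebra_simps)
  show ?thesis
    apply ((rule reaches_within_here, simp add: col_inv_def f table_filled_upd table_filled_next nx)
        | rule conjI | rule impI
        | (rule reaches_within_step, simp_all add: barrier_prog_def f rd l lt reg_neq split: if_split))+
    done
qed

lemma col_check_done: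
  assumes inv: "row_inv M c n" and ge: "\<not> reach_table x r n c < L"
  shows "reaches_within barrier_prog 59 (\<lambda>M'. filled_inv M' c) (52, M) 4"
proof -
  from inv have f: "M CELL = cell c n" "table_filled M c n" unfolding row_inv_def by auto
  have rd: "M (cell c n) = reach_table x r n c" using table_filled_read[OF f(2), of 0] by simp
  have l: "M 1 = L" using table_filled_L[OF f(2)] .
  have ge': "L \<le> reach_table x r n c" using ge by simp
  have inv2: "row_inv (M(TMP1 := v)) c n" for v using inv unfolding row_inv_def
    by (simp add: table_filled_upd)
  show ?thesis
    apply ((rule reaches_within_here, simp add: filled_inv_def inv2 ge')
        | rule conjI | rule impI
        | (rule reaches_within_step, simp_all add: barrier_prog_def f rd l ge reg_neq split: if_split))+
    done
qed

definition col_time :: "nat \<Rightarrow> nat" where "col_time c = n * (25 * c + 43) + 11"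

lemma col_time_mono: "c \<le> c' \<Longrightarrow> col_time c \<le> col_time c'"
  unfolding col_time_def by simp

lemma column_fill:
  assumes "col_inv M c"
  shows "reaches_within barrier_prog 52 (\<lambda>M'. row_inv M' c n) (7, M) (n * (25 * c + 43) + 5)"
proof -
  have "reaches_within barrier_prog 52 (\<lambda>M'. row_inv M' c n) (7, M) (4 + ((n - 0) * (25 * c + 43) + 1))"
    by (rule reaches_within_trans[OF col_enter[OF assms]]) (rule row_loop, simp_all)
  then show ?thesis by (simp add: add.commute)
qed

lemma col_next:
  assumes "col_inv M c" "reach_table x r n c < L"
  shows "reaches_within barrier_prog 7 (\<lambda>M'. col_inv M' (Suc c)) (7, M) (col_time c)"
  using reaches_within_trans[OF column_fill[OF assms(1)] col_check_next[OF _ assms(2)]]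
  by (simp add: col_time_def add.commute)

lemma col_done:
  assumes "col_inv M c" "\<not> reach_table x r n c < L"
  shows "reaches_within barrier_prog 59 (\<lambda>M'. filled_inv M' c) (7, M) (col_time c)"
  by (rule reaches_within_mono[OF reaches_within_trans[OF column_fill[OF assms(1)]
        col_check_done[OF _ assms(2)]]]) (simp_all add: col_time_def)

lemma fill_loop: "col_inv M c \<Longrightarrow> c \<le> cs \<Longrightarrow> (\<forall>c'<cs. reach_table x r n c' < L) \<Longrightarrow>
  L \<le> reach_table x r n cs \<Longrightarrow>
   reaches_within barrier_prog 59 (\<lambda>M'. filled_inv M' cs) (7, M) ((cs - c + 1) * col_time cs)"
proof (induction "cs - c" arbitrary: c M)
  case 0
  then have "c = cs" by simp
  then show ?case using col_done[of M cs] 0 by simp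
next
  case (Suc d)
  then have lt: "c < cs" by simp
  have "reaches_within barrier_prog 59 (\<lambda>M'. filled_inv M' cs) (7, M) (col_time c + (cs - Suc c + 1) * col_time cs)"
    apply (rule reaches_within_trans[OF col_next[OF Suc.prems(1)]])
    using Suc.prems lt apply simp
    apply (rule Suc.hyps)
    using Suc.hyps(2) Suc.prems lt by auto
  then show ?case
    apply (rule reaches_within_mono)
    using col_time_mono[of c cs] lt Suc.hyps(2) by (auto simp: Suc_diff_Suc)
qed

lemma table_filled_init: "table_filled (input_mem n L x r) 0 0"
  unfolding table_filled_def
  apply (intro conjI)
  apply simp
  apply simp
  apply (simp add: cell_def input_mem_def table_base_def N_def)
  apply (simp add: cell_def input_mem_def table_base_def N_def)
  done

lemma init_run: "reaches_within barrier_prog 7 (\<lambda>M'. col_inv M' 0) (0, input_mem n L x r) 7"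
proof -
  have m: "table_filled (input_mem n L x r) 0 0" by (rule table_filled_init)
  have m0: "input_mem n L x r 0 = N" by (simp add: input_mem_def N_def)
  have ad: "N + N + 1 + 1 + N = cell 0 0" "3 * N + 2 = cell 0 0" unfolding cell_def table_base_def
    by simp_all
  show ?thesis
    apply ((rule reaches_within_here, simp add: col_inv_def m table_filled_upd m0 ad stride_def)
        | rule conjI | rule impI
        | (rule reaches_within_step, simp_all add: barrier_prog_def m0 reg_neq numeral_2_eq_2[symmetric] split: if_split))+
    done
qed

end

lemma run_time_bound:
  fixes n cs :: nat
  assumes n1: "1 \<le> n"
  shows "7 + ((cs + 1) * (n * (25 * cs + 43) + 11) + (2 + (n * (25 + 4 * cs) + 1))) \<le> 200 * (cs^2 + 1) * n"
proof -
  have e: "7 + ((cs + 1) * (n * (25 * cs + 43) + 11) + (2 + (n * (25 + 4 * cs) + 1))) = n * (25 * cs * cs + 72 * cs + 68) + (11 * cs + 21)"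
    by (simp add: algebra_simps)
  have a: "11 * cs + 21 \<le> n * (11 * cs + 21)" using n1 by simp
  have b: "cs \<le> cs * cs" by (cases cs) auto
  have "n * (25 * cs * cs + 72 * cs + 68) + (11 * cs + 21) \<le> n * (25 * cs * cs + 72 * cs + 68) + n * (11 * cs + 21)"
    using a by simp
  also have "\<dots> = n * (25 * cs * cs + 83 * cs + 89)" by (simp add: algebra_simps)
  also have "\<dots> \<le> n * (200 * (cs * cs + 1))"
  proof (intro mult_le_mono2)
    have "83 * cs \<le> 83 * (cs * cs)" using b by simp
    moreover have "200 * (cs * cs + 1) = 200 * (cs * cs) + 200" by simp
    ultimately have "25 * (cs * cs) + 83 * cs + 89 \<le> 200 * (cs * cs + 1)" by linarith
    then show "25 * cs * cs + 83 * cs + 89 \<le> 200 * (cs * cs + 1)" by (simp add: mult.assoc)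
  qed
  finally show ?thesis using e by (simp add: power2_eq_square algebra_simps)
qed

lemma halted_barrier_prog: "halted barrier_prog (90, M)"
  unfolding halted_def by (simp add: barrier_prog_def)

context barrier_instance
begin

definition table_kept :: "mem \<Rightarrow> nat \<Rightarrow> bool" where
  "table_kept M cs \<longleftrightarrow> (\<forall>c'\<le>cs. \<forall>j. 1 \<le> j \<and> j \<le> n \<longrightarrow> M (cell c' j) = reach_table x r j c' \<and>
  M (cell c' j + 1) = int (reach_table_arg x r j c')) \<and>
     (\<forall>c'\<le>cs. M (cell c' 0) = 0)"

definition input_kept :: "mem \<Rightarrow> bool" where
  "input_kept M \<longleftrightarrow> (\<forall>i<n. M (2 + int i) = x i \<and> M (2 + N + int i) = r i)"

definition output_written :: "mem \<Rightarrow> nat \<Rightarrow> nat \<Rightarrow> bool" where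
  "output_written M cs m \<longleftrightarrow> (\<forall>i. m \<le> i \<and> i < n \<longrightarrow> M (2 + 2 * N + int i) = trace_pos cs i)"

definition trace_inv :: "mem \<Rightarrow> nat \<Rightarrow> nat \<Rightarrow> bool" where
  "trace_inv M cs m \<longleftrightarrow> M ONE = 1 \<and> M STRIDE = stride \<and> M ZERO = 0 \<and> M COUNT = int m \<and>
  M X_PTR = 2 + int m \<and>
     M R_PTR = 2 + N + int m \<and> M Y_PTR = 2 + 2 * N + int m \<and> M CELL = cell (trace_col cs m) m \<and>
     table_kept M cs \<and> input_kept M \<and> output_written M cs m"

lemma table_kept_upd: "a < table_base \<Longrightarrow> table_kept M cs \<Longrightarrow> table_kept (M(a := v)) cs"
  unfolding table_kept_def using cell_ge by (smt (verit) fun_upd_other)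

lemma table_kept_upd_neg: "a < 0 \<Longrightarrow> table_kept M cs \<Longrightarrow> table_kept (M(a := v)) cs"
  using table_kept_upd table_base_pos by simp

lemma input_kept_upd: "a < 0 \<or> 2 + 2 * N \<le> a \<Longrightarrow> input_kept M \<Longrightarrow> input_kept (M(a := v))"
  unfolding input_kept_def by (auto simp: N_def)

lemma output_written_upd: "a < 0 \<Longrightarrow> output_written M cs m \<Longrightarrow> output_written (M(a := v)) cs m"
  unfolding output_written_def by (auto simp: N_def)

lemma table_filled_kept: "table_filled M cs n \<Longrightarrow> table_kept M cs"
  unfolding table_filled_def table_kept_def by (meson le_neq_implies_less)

lemma table_filled_input_kept: "table_filled M cs i \<Longrightarrow> input_kept M"
proof -
  assume m: "table_filled M cs i"
  show ?thesis unfolding input_kept_def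
  proof (intro allI impI conjI)
    fix j assume j: "j < n"
    show "M (2 + int j) = x j" using table_filled_input[OF m, of "2 + int j"] input_mem_x[OF j] j
      by (simp add: table_base_def N_def)
    show "M (2 + N + int j) = r j"
      using table_filled_input[OF m, of "2 + N + int j"] input_mem_r[OF j] j
      by (simp add: table_base_def N_def)
  qed
qed

lemma trace_start:
  assumes inv: "filled_inv M cs"
  shows "reaches_within barrier_prog 61 (\<lambda>M'. trace_inv M' cs n) (59, M) 2"
proof -
  from inv have f: "M ONE = 1" "M STRIDE = stride" "M ZERO = 0" "M CELL = cell cs n"
    "M X_PTR = 2 + N" "M R_PTR = 2 + N + N"
    "table_filled M cs n" unfolding filled_inv_def row_inv_def N_def by auto
  have m0: "M 0 = N" using table_filled_input[OF f(7), of 0] table_base_pos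
    by (simp add: input_mem_def N_def)
  have t: "table_kept (M(a := v, b := w)) cs" if "a < 0" "b < 0" for a b v w
  proof -
    have "a < table_base" "b < table_base" using that table_base_pos by auto
    then show ?thesis using table_filled_kept[OF f(7)] by (simp add: table_kept_upd)
  qed
  have i: "input_kept (M(a := v, b := w))" if "a < 0" "b < 0" for a b v w
    using table_filled_input_kept[OF f(7)] that by (simp add: input_kept_upd)
  have o: "output_written M' cs n" for M' unfolding output_written_def by simp
  show ?thesis
    apply ((rule reaches_within_here, simp add: trace_inv_def f m0 t i o trace_col_n N_def)
        | rule conjI | rule impI
        | (rule reaches_within_step, simp_all add: barrier_prog_def f m0 reg_neq split: if_split))+
    done
qed

definition seek_inv :: "mem \<Rightarrow> nat \<Rightarrow> nat \<Rightarrow> nat \<Rightarrow> bool" where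
  "seek_inv M cs m j \<longleftrightarrow> M ONE = 1 \<and> M STRIDE = stride \<and> M ZERO = 0 \<and> M COUNT = int (m - 1) \<and>
  M X_PTR = 2 + int (m - 1) \<and>
     M R_PTR = 2 + N + int (m - 1) \<and> M Y_PTR = 2 + 2 * N + int (m - 1) \<and>
     M SHIFT = int (reach_table_arg x r m (trace_col cs m)) \<and> M XI = x (m - 1) \<and>
       M RI = r (m - 1) \<and> M TMP2 = int j \<and>
     j \<le> reach_table_arg x r m (trace_col cs m) \<and>
     M CELL = cell (trace_col cs m - (reach_table_arg x r m (trace_col cs m) - j)) (m - 1) \<and>
     table_kept M cs \<and> input_kept M \<and> output_written M cs m"

lemma trace_head:
  assumes inv: "trace_inv M cs m" and m0: "0 < m" and mn: "m \<le> n"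
  shows "reaches_within barrier_prog 73 (\<lambda>M'. seek_inv M' cs m (reach_table_arg x r m (trace_col cs m))) (61, M) 12"
proof -
  obtain m' where mm: "m = Suc m'" using m0 gr0_implies_Suc by blast
  define cc where "cc = trace_col cs m"
  define k where "k = reach_table_arg x r m cc"
  define xa where "xa = 2 + int m'"
  define ra where "ra = 2 + N + int m'"
  define ya where "ya = 2 + 2 * N + int m'"
  define ia where "ia = cell cc m'"
  from inv have f: "M ONE = 1" "M STRIDE = stride" "M ZERO = 0" "M COUNT = int m' + 1"
    "M X_PTR = xa + 1"
    "M R_PTR = ra + 1" "M Y_PTR = ya + 1" "M CELL = ia + 2" "table_kept M cs" "input_kept M"
    "output_written M cs m"
    unfolding trace_inv_def xa_def ra_def ya_def ia_def cc_def mm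
    by (auto simp: cell_Suc[symmetric])
  have cc: "cc \<le> cs" unfolding cc_def by (rule trace_col_le)
  have rd: "M (ia + 3) = int k" "M xa = x m'" "M ra = r m'"
  proof -
    have e: "ia + 3 = cell cc m + 1" unfolding ia_def mm cell_Suc[symmetric] by simp
    have "M (cell cc m + 1) = int k" using f(9) cc m0 mn unfolding table_kept_def k_def by simp
    then show "M (ia + 3) = int k" by (simp only: e)
    show "M xa = x m'" "M ra = r m'" using f(10) mn unfolding input_kept_def mm xa_def ra_def
      by auto
  qed
  have nn: "0 \<le> xa" "0 \<le> ra" "0 \<le> ya" "0 \<le> ia" unfolding xa_def ra_def ya_def ia_def by auto
  have rd2: "M (3 + ia) = int k" using rd(1) by (simp add: add.commute)
  have o: "output_written M cs (Suc m')" using f(11) mm by simp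
  have eqs: "trace_col cs (Suc m') = cc" "reach_table_arg x r (Suc m') cc = k"
    unfolding cc_def k_def mm by simp_all
  have cnt: "int m' + 1 \<noteq> 0" by simp
  have t: "table_kept M' cs \<and> input_kept M' \<and> output_written M' cs m" if "\<forall>a. a \<ge> 0 \<longrightarrow> M' a = M a"
    for M'
  proof -
    have "table_kept M' cs" using f(9) that unfolding table_kept_def using cell_nonneg by simp
    moreover have "input_kept M'" using f(10) that unfolding input_kept_def by simp
    moreover have "output_written M' cs m" using f(11) that unfolding output_written_def by simp
    ultimately show ?thesis by blast
  qed
  show ?thesis
    apply ((rule reaches_within_here, simp add: seek_inv_def mm f o rd rd2 nn eqs table_kept_upd_neg input_kept_upd output_written_upd xa_def[symmetric] ra_def[symmetric] ya_def[symmetric] ia_def[symmetric])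
        | rule conjI | rule impI
        | (rule reaches_within_step, simp_all add: barrier_prog_def f rd rd2 nn cnt reg_neq split: if_split))+
    done
qed

lemma seek_body:
  assumes inv: "seek_inv M cs m (Suc j)" and m0: "0 < m"
  shows "reaches_within barrier_prog 73 (\<lambda>M'. seek_inv M' cs m j) (73, M) 4"
proof -
  define cc where "cc = trace_col cs m"
  define k where "k = reach_table_arg x r m cc"
  define a1 where "a1 = cell (cc - (k - j)) (m - 1)"
  have kc: "k \<le> cc" unfolding k_def using reach_table_arg_le[OF m0] .
  from inv have jk: "Suc j \<le> k" unfolding seek_inv_def k_def cc_def by simp
  have ea: "cell (cc - (k - Suc j)) (m - 1) = a1 + stride"
  proof -
    have "cc - (k - Suc j) = Suc (cc - (k - j))" using jk kc by simp
    then show ?thesis unfolding a1_def cell_def by (simp add: algebra_simps)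
  qed
  from inv have ia0: "M CELL = cell (cc - (k - Suc j)) (m - 1)" unfolding seek_inv_def k_def cc_def
    by blast
  from inv have f: "M ONE = 1" "M STRIDE = stride" "M TMP2 = int j + 1" "M CELL = a1 + stride"
    unfolding seek_inv_def k_def cc_def using ia0 ea by auto
  have j1: "int j + 1 \<noteq> 0" by simp
  have fin: "seek_inv (M(CELL := a1, TMP2 := int j)) cs m j"
    using inv jk unfolding seek_inv_def k_def cc_def a1_def
    by (simp add: table_kept_upd_neg input_kept_upd output_written_upd)
  show ?thesis
    apply ((rule reaches_within_here, simp add: fin)
        | rule conjI | rule impI
        | (rule reaches_within_step, simp_all add: barrier_prog_def f j1 split: if_split))+
    done
qed

lemma seek_exit:
  assumes inv: "seek_inv M cs m 0"
  shows "reaches_within barrier_prog 77 (\<lambda>M'. seek_inv M' cs m 0) (73, M) 1"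
proof -
  from inv have f: "M TMP2 = 0" unfolding seek_inv_def by simp
  show ?thesis
    apply ((rule reaches_within_here, simp add: inv)
        | rule conjI | rule impI
        | (rule reaches_within_step, simp_all add: barrier_prog_def f split: if_split))+
    done
qed

lemma seek_loop: "seek_inv M cs m j \<Longrightarrow> 0 < m \<Longrightarrow>
  reaches_within barrier_prog 77 (\<lambda>M'. seek_inv M' cs m 0) (73, M) (4 * j + 1)"
proof (induction j arbitrary: M)
  case 0 then show ?case using seek_exit by simp
next
  case (Suc j)
  have "reaches_within barrier_prog 77 (\<lambda>M'. seek_inv M' cs m 0) (73, M) (4 + (4 * j + 1))"
    apply (rule reaches_within_trans[OF seek_body[OF Suc.prems]])
    using Suc.IH Suc.prems(2) by blast
  then show ?case by simp
qed

lemma trace_tail: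
  assumes inv: "seek_inv M cs m 0" and m0: "0 < m" and mn: "m \<le> n"
  shows "reaches_within barrier_prog 61 (\<lambda>M'. trace_inv M' cs (m - 1)) (77, M) 12"
proof -
  obtain m' where mm: "m = Suc m'" using m0 gr0_implies_Suc by blast
  define cc where "cc = trace_col cs m"
  define k where "k = reach_table_arg x r m cc"
  define ya where "ya = 2 + 2 * N + int m'"
  define ia where "ia = cell (trace_col cs m') m'"
  define pv where "pv = reach_table x r m' (trace_col cs m')"
  have cstep: "trace_col cs m' = cc - k" using trace_col_pred[OF m0 mn] unfolding cc_def k_def mm
    by simp
  from inv have f: "M ONE = 1" "M STRIDE = stride" "M ZERO = 0" "M COUNT = int m'"
    "M X_PTR = 2 + int m'"
    "M R_PTR = 2 + N + int m'" "M Y_PTR = ya" "M SHIFT = int k" "M XI = x m'" "M RI = r m'"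
     "M CELL = ia" "table_kept M cs" "input_kept M" "output_written M cs (Suc m')"
    unfolding seek_inv_def ya_def ia_def k_def cc_def mm
    by (auto simp: cstep[unfolded cc_def k_def mm])
  have rd: "M ia = pv"
  proof (cases "m' = 0")
    case True then show ?thesis using f(12) trace_col_le unfolding table_kept_def ia_def pv_def
      by simp
  next
    case False then show ?thesis using f(12) trace_col_le mn mm
      unfolding table_kept_def ia_def pv_def by simp
  qed
  have nn: "0 \<le> ya" "0 \<le> ia" unfolding ya_def ia_def by auto
  have yaTb: "ya < table_base" "2 + 2 * N \<le> ya" using mn mm unfolding ya_def table_base_def N_def
    by auto
  have yv: "trace_pos cs m' = extend_pos pv (int k) (x m') (r m')"
    unfolding trace_pos_def pv_def k_def cc_def mm by simp
  have fin: "trace_inv M' cs m'" if "\<forall>a. a \<noteq> ya \<longrightarrow> a \<ge> 0 \<longrightarrow> M' a = M a" "M' ONE = 1"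
    "M' STRIDE = stride" "M' ZERO = 0"
    "M' COUNT = int m'" "M' X_PTR = 2 + int m'" "M' R_PTR = 2 + N + int m'" "M' Y_PTR = ya"
    "M' CELL = ia" "M' ya = trace_pos cs m'" for M'
  proof -
    have "table_kept M' cs" using f(12) that(1) yaTb cell_ge unfolding table_kept_def
      by (smt (verit) cell_nonneg)
    moreover have "input_kept M'" unfolding input_kept_def
    proof (intro allI impI conjI)
      fix i assume i: "i < n"
      then have "2 + int i < 2 + 2 * N" "2 + N + int i < 2 + 2 * N" by (auto simp: N_def)
      then have "2 + int i \<noteq> ya" "2 + N + int i \<noteq> ya" "0 \<le> 2 + int i" "0 \<le> 2 + N + int i"
        using yaTb by auto
      then show "M' (2 + int i) = x i" "M' (2 + N + int i) = r i" using that(1) f(13) i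
        unfolding input_kept_def by auto
    qed
    moreover have "output_written M' cs m'" using f(14) that(1,10)
      unfolding output_written_def ya_def
      by (smt (verit) N_nonneg Suc_leI le_neq_implies_less of_nat_0_le_iff of_nat_eq_iff)
    ultimately show ?thesis unfolding trace_inv_def using that ia_def ya_def by simp
  qed
  show ?thesis
    apply ((rule reaches_within_here, simp add: mm, rule fin, simp_all add: f yv extend_pos_def reg_neq nn)
        | rule conjI | rule impI
        | (rule reaches_within_step, simp_all add: barrier_prog_def f rd nn reg_neq split: if_split))+
    done
qed

lemma trace_exit:
  assumes inv: "trace_inv M cs 0"
  shows "reaches_within barrier_prog 90 (\<lambda>M'. output_written M' cs 0) (61, M) 1"
proof -
  from inv have f: "M COUNT = 0" "output_written M cs 0" unfolding trace_inv_def by simp_all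
  show ?thesis
    apply ((rule reaches_within_here, simp add: f)
        | rule conjI | rule impI
        | (rule reaches_within_step, simp_all add: barrier_prog_def f split: if_split))+
    done
qed

lemma trace_body:
  assumes inv: "trace_inv M cs m" and m0: "0 < m" and mn: "m \<le> n"
  shows "reaches_within barrier_prog 61 (\<lambda>M'. trace_inv M' cs (m - 1)) (61, M) (25 + 4 * cs)"
proof -
  have kc: "reach_table_arg x r m (trace_col cs m) \<le> cs"
    using reach_table_arg_le[OF m0] trace_col_le order_trans by blast
  have "reaches_within barrier_prog 61 (\<lambda>M'. trace_inv M' cs (m - 1)) (61, M) (12 + (4 * reach_table_arg x r m (trace_col cs m) + 1) + 12)"
    apply (rule reaches_within_trans[OF reaches_within_trans[OF trace_head[OF inv m0 mn]]])
     apply (erule seek_loop[OF _ m0])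
    apply (erule trace_tail[OF _ m0 mn])
    done
  then show ?thesis by (rule reaches_within_mono) (use kc in auto)
qed

lemma trace_loop: "trace_inv M cs m \<Longrightarrow> m \<le> n \<Longrightarrow>
  reaches_within barrier_prog 90 (\<lambda>M'. output_written M' cs 0) (61, M) (m * (25 + 4 * cs) + 1)"
proof (induction m arbitrary: M)
  case 0 then show ?case using trace_exit by simp
next
  case (Suc m)
  have "reaches_within barrier_prog 90 (\<lambda>M'. output_written M' cs 0) (61, M) ((25 + 4 * cs) + (m * (25 + 4 * cs) + 1))"
    apply (rule reaches_within_trans[OF trace_body[OF Suc.prems(1)]])
    using Suc by auto
  then show ?case by (simp add: algebra_simps)
qed

lemma barrier_prog_run: "(\<forall>c'<cs. reach_table x r n c' < L) \<Longrightarrow> L \<le> reach_table x r n cs \<Longrightarrow>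
   reaches_within barrier_prog 90 (\<lambda>M'. output_written M' cs 0) (0, input_mem n L x r) (7 + ((cs + 1) * col_time cs + (2 + (n * (25 + 4 * cs) + 1))))"
proof -
  assume h1: "\<forall>c'<cs. reach_table x r n c' < L" and h2: "L \<le> reach_table x r n cs"
  have b: "reaches_within barrier_prog 59 (\<lambda>M'. filled_inv M' cs) (7, M) ((cs + 1) * col_time cs)"
    if "col_inv M 0" for M
    using fill_loop[OF that _ h1 h2] by simp
  have d: "reaches_within barrier_prog 90 (\<lambda>M'. output_written M' cs 0) (61, M) (n * (25 + 4 * cs) + 1)" if "trace_inv M cs n" for M
    using trace_loop[OF that] by simp
  show ?thesis
    by (rule reaches_within_trans[OF init_run reaches_within_trans[OF b reaches_within_trans[OF trace_start d]]])
qed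

lemma barrier_prog_halts:
  assumes minimal: "\<forall>c<cs. reach_table x r n c < L" and reached: "L \<le> reach_table x r n cs"
    and n: "0 < n"
  obtains t M' where "halts_in barrier_prog (0, input_mem n L x r) t (90, M')"
    and "t \<le> 200 * (cs\<^sup>2 + 1) * n"
    and "\<And>i. i < n \<Longrightarrow> output_sol n M' i = of_int (trace_pos cs i)"
proof -
  obtain t where t: "t \<le> 7 + ((cs + 1) * col_time cs + (2 + (n * (25 + 4 * cs) + 1)))"
    "fst ((step barrier_prog ^^ t) (0, input_mem n L x r)) = 90"
    "output_written (snd ((step barrier_prog ^^ t) (0, input_mem n L x r))) cs 0"
    using barrier_prog_run[OF minimal reached] unfolding reaches_within_def by blast
  define M' where "M' = snd ((step barrier_prog ^^ t) (0, input_mem n L x r))"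
  have "halts_in barrier_prog (0, input_mem n L x r) t (90, M')"
    using t(2) halted_barrier_prog unfolding halts_in_def M'_def by (simp add: prod_eq_iff)
  moreover have "t \<le> 200 * (cs\<^sup>2 + 1) * n"
    using t(1) run_time_bound[of n cs] n unfolding col_time_def by simp
  moreover have "output_sol n M' i = of_int (trace_pos cs i)" if "i < n" for i
    using t(3) that unfolding M'_def output_written_def output_sol_def N_def by simp
  ultimately show ?thesis using that by blast
qed

end

theorem mainTheorem7:
  shows "\<exists>(P :: instr list) (C :: real). \<forall>(n :: nat) (L :: int) (x :: nat \<Rightarrow> int) (r :: nat \<Rightarrow> int).
     L > 0 \<longrightarrow>
     (\<forall>i<n. r i > 0) \<longrightarrow>
     (\<forall>i j. i \<le> j \<longrightarrow> j < n \<longrightarrow> x i \<le> x j) \<longrightarrow>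
     (\<exists>y. feasible n (real_of_int L) (\<lambda>i. real_of_int (r i)) y \<and>
          order_preserving n (real_of_int L) (\<lambda>i. real_of_int (r i)) y) \<longrightarrow>
     (\<exists>t pc M'. halts_in P (0, input_mem n L x r) t (pc, M') \<and>
        (let opt = opt_op n (real_of_int L) (\<lambda>i. real_of_int (x i)) (\<lambda>i. real_of_int (r i));
             y = output_sol n M'
         in feasible n (real_of_int L) (\<lambda>i. real_of_int (r i)) y \<and>
            order_preserving n (real_of_int L) (\<lambda>i. real_of_int (r i)) y \<and>
            cost n (\<lambda>i. real_of_int (x i)) y = opt \<and>
            real t \<le> C * (opt\<^sup>2 + 1) * real n))"
proof (intro exI[of _ barrier_prog] exI[of _ "200::real"] allI impI)
  fix n :: nat and L :: int and x r :: "nat \<Rightarrow> int"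
  assume L: "L > 0" and "\<forall>i<n. r i > 0" "\<forall>i j. i \<le> j \<longrightarrow> j < n \<longrightarrow> x i \<le> x j"
    and "\<exists>y. feasible n (real_of_int L) (\<lambda>i. real_of_int (r i)) y \<and>
          order_preserving n (real_of_int L) (\<lambda>i. real_of_int (r i)) y"
  then obtain y where y: "feasible n (real_of_int L) (\<lambda>i. real_of_int (r i)) y"
    "order_preserving n (real_of_int L) (\<lambda>i. real_of_int (r i)) y" by blast
  interpret barrier_instance n L x r .
  obtain cs where minimal: "\<forall>c<cs. reach_table x r n c < L" and reached: "L \<le> reach_table x r n cs"
    using exists_first_reaching_column[OF L y(2)] .
  obtain t M' where run: "halts_in barrier_prog (0, input_mem n L x r) t (90, M')"
    and time: "t \<le> 200 * (cs\<^sup>2 + 1) * n"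
    and out: "\<And>i. i < n \<Longrightarrow> output_sol n M' i = of_int (trace_pos cs i)"
    using barrier_prog_halts[OF minimal reached feasible_sensors_nonempty[OF _ y(1)]] L by auto
  note opt = traced_solution_optimal[OF L minimal reached out]
  have "real t \<le> real (200 * (cs\<^sup>2 + 1) * n)" using time by (simp only: of_nat_le_iff)
  then have "real t \<le> 200 * ((real cs)\<^sup>2 + 1) * real n" by (simp add: add.commute)
  then show "\<exists>t pc M'. halts_in barrier_prog (0, input_mem n L x r) t (pc, M') \<and>
     (let opt = opt_op n (real_of_int L) (\<lambda>i. real_of_int (x i)) (\<lambda>i. real_of_int (r i));
          y = output_sol n M'
      in feasible n (real_of_int L) (\<lambda>i. real_of_int (r i)) y \<and>
         order_preserving n (real_of_int L) (\<lambda>i. real_of_int (r i)) y \<and>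
         cost n (\<lambda>i. real_of_int (x i)) y = opt \<and> real t \<le> 200 * (opt\<^sup>2 + 1) * real n)"
    using run opt order_preserving_feasible[OF opt(1)]
    by (intro exI[of _ t] exI[of _ 90] exI[of _ M']) (simp add: Let_def)
qed

end
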